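(* Let $0<\varepsilon<1$, $T>0$, $u\in C_c^\infty(\Omega\times[0,T];\mathbb R^n)$, and let $\varphi$ (with $\nabla^j\varphi$, $j\le3$, and $\partial_t\nabla^k\varphi$, $k\le1$, continuous on $\Omega\times[0,T]$, and, if $\Omega=\mathbb R^n$, $R^k\|\varphi+1\|_{C^2((\mathbb R^n\setminus B_R)\times[0,T])}\to0$ as $R\to\infty$ for every $k$) satisfy $\partial_t\varphi+u\cdot\nabla\varphi=\Delta\varphi-W'(\varphi)/\varepsilon^2$ on $\Omega\times[0,T]$. There is a constant $c_2$ depending only on $n$ such that for all $y\in\Omega$ and $0<t<s<\infty$ with $t<T$, writing $\tilde\rho=\tilde\rho_{(y,s)}(x,t)$, $$\frac{d}{dt}\int_\Omega\tilde\rho\,d\mu^\varepsilon_t\le\frac12\int_\Omega\tilde\rho|u|^2d\mu^\varepsilon_t+\frac1{2(s-t)}\int_\Omega\xi_\varepsilon\tilde\rho\,dx+c_2e^{-\frac1{128(s-t)}}\mu^\varepsilon_t(B_{1/2}(y)).$$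
   Context: $n\ge2$, $\Omega=\mathbb T^n$ (functions $\mathbb Z^n$-periodic) or $\mathbb R^n$. $W:\mathbb R\to[0,\infty)$ is $C^3$ with $W(\pm1)=W'(\pm1)=0$ (double-well potential). $e_\varepsilon:=\frac{\varepsilon|\nabla\varphi|^2}2+\frac{W(\varphi)}\varepsilon$, $\xi_\varepsilon:=\frac{\varepsilon|\nabla\varphi|^2}2-\frac{W(\varphi)}\varepsilon$, $\mu^\varepsilon_t:=e_\varepsilon(\cdot,t)\,dx$. Fix a radially symmetric $\eta\in C_c^\infty(B_{1/2})$ with $0\le\eta\le1$, $\eta=1$ on $B_{1/4}$. For $t<s$: $\rho_{(y,s)}(x,t)=(4\pi(s-t))^{-\frac{n-1}2}e^{-\frac{|x-y|^2}{4(s-t)}}$ and $\tilde\rho_{(y,s)}(x,t)=\rho_{(y,s)}(x,t)\eta(x-y)$. *)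

theory Defs
  imports "HOL-Analysis.Analysis"
begin

definition pdx :: "'n::finite \<Rightarrow> (real^'n \<Rightarrow> real \<Rightarrow> real) \<Rightarrow> real^'n \<Rightarrow> real \<Rightarrow> real" where
  "pdx i f x t = deriv (\<lambda>h. f (x + h *\<^sub>R axis i 1) t) 0"

definition has_pdx :: "'n::finite \<Rightarrow> (real^'n \<Rightarrow> real \<Rightarrow> real) \<Rightarrow> real \<Rightarrow> bool" where
  "has_pdx i f T \<longleftrightarrow> (\<forall>x. \<forall>t\<in>{0..T}. (\<lambda>h. f (x + h *\<^sub>R axis i 1) t) differentiable (at 0))"

definition pdt :: "real \<Rightarrow> (real^'n \<Rightarrow> real \<Rightarrow> real) \<Rightarrow> real^'n \<Rightarrow> real \<Rightarrow> real" where
  "pdt T f x t = (THE D. ((\<lambda>\<tau>. f x \<tau>) has_real_derivative D) (at t within {0..T}))"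

definition has_pdt :: "real \<Rightarrow> (real^'n \<Rightarrow> real \<Rightarrow> real) \<Rightarrow> bool" where
  "has_pdt T f \<longleftrightarrow> (\<forall>x. \<forall>t\<in>{0..T}. (\<lambda>\<tau>. f x \<tau>) differentiable (at t within {0..T}))"

definition cont_Q :: "real \<Rightarrow> (real^'n \<Rightarrow> real \<Rightarrow> real) \<Rightarrow> bool" where
  "cont_Q T g \<longleftrightarrow> continuous_on (UNIV \<times> {0..T}) (\<lambda>p. g (fst p) (snd p))"

definition phase_regular :: "real \<Rightarrow> (real^'n::finite \<Rightarrow> real \<Rightarrow> real) \<Rightarrow> bool" where
  "phase_regular T \<phi> \<longleftrightarrow>
     cont_Q T \<phi> \<and>
     (\<forall>i. has_pdx i \<phi> T \<and> cont_Q T (pdx i \<phi>)) \<and>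
     (\<forall>i j. has_pdx j (pdx i \<phi>) T \<and> cont_Q T (pdx j (pdx i \<phi>))) \<and>
     (\<forall>i j k. has_pdx k (pdx j (pdx i \<phi>)) T \<and> cont_Q T (pdx k (pdx j (pdx i \<phi>)))) \<and>
     has_pdt T \<phi> \<and> cont_Q T (pdt T \<phi>) \<and>
     (\<forall>i. has_pdt T (pdx i \<phi>) \<and> cont_Q T (pdt T (pdx i \<phi>)))"

definition dirpd :: "'a::euclidean_space \<Rightarrow> ('a \<Rightarrow> real) \<Rightarrow> 'a \<Rightarrow> real" where
  "dirpd v f z = deriv (\<lambda>h. f (z + h *\<^sub>R v)) 0"

definition smooth_fun :: "('a::euclidean_space \<Rightarrow> real) \<Rightarrow> bool" where
  "smooth_fun f \<longleftrightarrow> (\<forall>vs. set vs \<subseteq> Basis \<longrightarrow>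
      continuous_on UNIV (foldr dirpd vs f) \<and>
      (\<forall>v\<in>Basis. \<forall>z. (\<lambda>h. foldr dirpd vs f (z + h *\<^sub>R v)) differentiable (at 0)))"

definition zn_periodic :: "(real^'n::finite \<Rightarrow> real \<Rightarrow> 'b) \<Rightarrow> bool" where
  "zn_periodic f \<longleftrightarrow> (\<forall>(k::'n \<Rightarrow> int) x t. f (x + (\<chi> i. real_of_int (k i))) t = f x t)"

definition decays_to_minus_one :: "real \<Rightarrow> (real^'n::finite \<Rightarrow> real \<Rightarrow> real) \<Rightarrow> bool" where
  "decays_to_minus_one T \<phi> \<longleftrightarrow> (\<forall>k::nat. \<forall>e>0. \<exists>R0. \<forall>R\<ge>R0. \<forall>x. \<forall>t\<in>{0..T}. norm x \<ge> R \<longrightarrow>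
      R ^ k * (\<bar>\<phi> x t + 1\<bar> + (\<Sum>i\<in>UNIV. \<bar>pdx i \<phi> x t\<bar>)
               + (\<Sum>i\<in>UNIV. \<Sum>j\<in>UNIV. \<bar>pdx j (pdx i \<phi>) x t\<bar>)) \<le> e)"

definition e_eps :: "(real \<Rightarrow> real) \<Rightarrow> real \<Rightarrow> (real^'n::finite \<Rightarrow> real \<Rightarrow> real) \<Rightarrow> real^'n \<Rightarrow> real \<Rightarrow> real" where
  "e_eps W \<epsilon> \<phi> x t = \<epsilon> * (\<Sum>i\<in>UNIV. (pdx i \<phi> x t)\<^sup>2) / 2 + W (\<phi> x t) / \<epsilon>"

definition xi_eps :: "(real \<Rightarrow> real) \<Rightarrow> real \<Rightarrow> (real^'n::finite \<Rightarrow> real \<Rightarrow> real) \<Rightarrow> real^'n \<Rightarrow> real \<Rightarrow> real" where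
  "xi_eps W \<epsilon> \<phi> x t = \<epsilon> * (\<Sum>i\<in>UNIV. (pdx i \<phi> x t)\<^sup>2) / 2 - W (\<phi> x t) / \<epsilon>"

definition rho_heat :: "real^'n::finite \<Rightarrow> real \<Rightarrow> real^'n \<Rightarrow> real \<Rightarrow> real" where
  "rho_heat y s x t = (4 * pi * (s - t)) powr (- (real CARD('n) - 1) / 2)
       * exp (- (norm (x - y))\<^sup>2 / (4 * (s - t)))"

definition rho_tilde :: "(real^'n::finite \<Rightarrow> real) \<Rightarrow> real^'n \<Rightarrow> real \<Rightarrow> real^'n \<Rightarrow> real \<Rightarrow> real" where
  "rho_tilde \<eta> y s x t = rho_heat y s x t * \<eta> (x - y)"

end

theory Submission
  imports Defs
begin

text \<open>Write \<open>\<rho>\<^sup>\<sim> = \<rho> \<eta>(\<cdot> - y)\<close> and \<open>e\<close> for the energy density. Differentiating under the integral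
  and integrating by parts three times turns \<open>d/dt \<integral> \<rho>\<^sup>\<sim> e\<close> into the integral of a pointwise expression. As in
  Huisken's monotonicity formula, the terms in which \<open>\<eta>\<close> is not differentiated complete a square
  \<open>-\<epsilon> \<rho> \<eta> (v - c)\<^sup>2\<close> with \<open>v = \<Delta>\<phi> - W'(\<phi>)/\<epsilon>\<^sup>2\<close>, leaving \<open>\<rho>\<^sup>\<sim> |u|\<^sup>2 e / 2 + \<xi> \<rho>\<^sup>\<sim> / (2(s - t))\<close>.
  The terms containing derivatives of \<open>\<eta>\<close> live on \<open>1/4 \<le> |x - y| \<le> 1/2\<close>, where the heat kernel
  is at most a multiple of \<open>exp (-1 / (128 (s - t)))\<close>; the one quotient \<open>|\<nabla>\<eta> \<cdot> \<nabla>\<phi>|\<^sup>2 / \<eta>\<close> is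
  controlled by Glaeser's inequality \<open>|\<nabla>\<eta>|\<^sup>2 \<le> 2 sup |\<nabla>\<^sup>2\<eta>| \<eta>\<close>.\<close>

definition has_dirderiv :: "'a::real_normed_vector \<Rightarrow> ('a \<Rightarrow> real) \<Rightarrow> ('a \<Rightarrow> real) \<Rightarrow> bool" where
  "has_dirderiv v F F' \<longleftrightarrow> (\<forall>x. ((\<lambda>h. F (x + h *\<^sub>R v)) has_real_derivative F' x) (at 0))"

lemma has_dirderiv_along_line:
  assumes "has_dirderiv v F F'"
  shows "((\<lambda>h. F (x + h *\<^sub>R v)) has_real_derivative F' (x + h0 *\<^sub>R v)) (at h0)"
proof -
  have "((\<lambda>k. F ((x + h0 *\<^sub>R v) + k *\<^sub>R v)) has_real_derivative F' (x + h0 *\<^sub>R v)) (at 0)"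
    using assms unfolding has_dirderiv_def by blast
  hence "((\<lambda>k. F ((x + h0 *\<^sub>R v) + k *\<^sub>R v)) has_real_derivative F' (x + h0 *\<^sub>R v)) (at (h0
      + (-h0)))"
    by simp
  hence "((\<lambda>h. F ((x + h0 *\<^sub>R v) + (h + - h0) *\<^sub>R v)) has_real_derivative F' (x
      + h0 *\<^sub>R v)) (at h0)"
    by (subst (asm) DERIV_shift)
  moreover have "(\<lambda>h. F ((x + h0 *\<^sub>R v) + (h + - h0) *\<^sub>R v)) = (\<lambda>h. F (x + h *\<^sub>R v))"
    by (rule ext) (simp add: algebra_simps)
  ultimately show ?thesis by simp
qed

lemma has_dirderiv_dirpd:
  fixes F :: "'a::euclidean_space \<Rightarrow> real"
  assumes "\<forall>x. (\<lambda>h. F (x + h *\<^sub>R v)) differentiable (at 0)"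
  shows "has_dirderiv v F (dirpd v F)"
  unfolding has_dirderiv_def dirpd_def
  using assms by (simp add: DERIV_deriv_iff_real_differentiable)

lemma has_dirderiv_add: "has_dirderiv v F F' \<Longrightarrow> has_dirderiv v G G'
    \<Longrightarrow> has_dirderiv v (\<lambda>x. F x + G x) (\<lambda>x. F' x + G' x)"
  unfolding has_dirderiv_def by (auto intro!: derivative_intros)

lemma has_dirderiv_mult: "has_dirderiv v F F' \<Longrightarrow> has_dirderiv v G G'
    \<Longrightarrow> has_dirderiv v (\<lambda>x. F x * G x) (\<lambda>x. F' x * G x + F x * G' x)"
  unfolding has_dirderiv_def by (auto intro!: derivative_eq_intros)

lemma has_dirderiv_cmult: "has_dirderiv v F F' \<Longrightarrow> has_dirderiv v (\<lambda>x. c * F x) (\<lambda>x. c * F' x)"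
  unfolding has_dirderiv_def by (auto intro!: derivative_eq_intros)

lemma has_dirderiv_sum: "(\<And>i. i \<in> I \<Longrightarrow> has_dirderiv v (F i) (F' i))
    \<Longrightarrow> has_dirderiv v (\<lambda>x. \<Sum>i\<in>I. F i x) (\<lambda>x. \<Sum>i\<in>I. F' i x)"
  unfolding has_dirderiv_def by (auto intro!: derivative_eq_intros DERIV_sum)

lemma has_dirderiv_comp:
  assumes "has_dirderiv v F F'" "\<And>z. (g has_real_derivative g' z) (at z)"
  shows "has_dirderiv v (\<lambda>x. g (F x)) (\<lambda>x. g' (F x) * F' x)"
  unfolding has_dirderiv_def
proof
  fix x
  have "((\<lambda>h. F (x + h *\<^sub>R v)) has_real_derivative F' x) (at 0)" using assms(1)
    unfolding has_dirderiv_def by blast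
  moreover have "(g has_real_derivative g' (F (x + 0 *\<^sub>R v))) (at (F (x + 0 *\<^sub>R v)))" using assms(2)
    by blast
  ultimately have "((\<lambda>h. g (F (x + h *\<^sub>R v))) has_real_derivative g' (F (x + 0 *\<^sub>R v))
      * F' x) (at 0)"
    using DERIV_chain2[of g "g' (F (x + 0 *\<^sub>R v))" "\<lambda>h. F (x + h *\<^sub>R v)" 0] by simp
  thus "((\<lambda>h. g (F (x + h *\<^sub>R v))) has_real_derivative g' (F x) * F' x) (at 0)" by simp
qed

lemma has_dirderiv_zero_on_open:
  assumes "has_dirderiv v F F'" "open U" "\<forall>z\<in>U. F z = c" "x \<in> U"
  shows "F' x = 0"
proof -
  have d: "((\<lambda>h. F (x + h *\<^sub>R v)) has_real_derivative F' x) (at 0)" using assms(1)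
    unfolding has_dirderiv_def by blast
  have "continuous_on UNIV (\<lambda>h::real. x + h *\<^sub>R v)" by (intro continuous_intros)
  hence "open ((\<lambda>h::real. x + h *\<^sub>R v) -` U)"
    using assms(2) open_vimage by blast
  moreover have "0 \<in> (\<lambda>h::real. x + h *\<^sub>R v) -` U" using assms(4) by simp
  ultimately obtain e where e: "e > 0" "ball 0 e \<subseteq> (\<lambda>h::real. x + h *\<^sub>R v) -` U"
    using open_contains_ball by blast
  have "((\<lambda>h. c) has_real_derivative F' x) (at 0)"
  proof (rule has_field_derivative_transform_within_open[OF d, of "ball 0 e"])
    show "open (ball (0::real) e)" by simp
    show "(0::real) \<in> ball 0 e" using e by simp
    show "\<And>h. h \<in> ball 0 e \<Longrightarrow> F (x + h *\<^sub>R v) = c" using e assms(3) by auto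
  qed
  moreover have "((\<lambda>h::real. c) has_real_derivative 0) (at 0)" by simp
  ultimately show ?thesis using DERIV_unique by blast
qed

lemma pdx_dirpd: "pdx i f x t = dirpd (axis i 1) (\<lambda>z. f z t) x"
  unfolding pdx_def dirpd_def by simp

lemma has_pdx_has_dirderiv:
  assumes "has_pdx i f T" "t \<in> {0..T}"
  shows "has_dirderiv (axis i 1) (\<lambda>z. f z t) (\<lambda>z. pdx i f z t)"
proof -
  have "has_dirderiv (axis i 1) (\<lambda>z. f z t) (dirpd (axis i 1) (\<lambda>z. f z t))"
    using assms by (intro has_dirderiv_dirpd) (auto simp: has_pdx_def)
  thus ?thesis by (simp add: pdx_dirpd[abs_def])
qed

lemma has_pdt_has_real_derivative:
  assumes "has_pdt T f" "0 < t" "t < T"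
  shows "((\<lambda>\<tau>. f x \<tau>) has_real_derivative pdt T f x t) (at t)"
proof -
  have w: "at t within {0..T} = at t" using assms by (simp add: at_within_Icc_at)
  have "(\<lambda>\<tau>. f x \<tau>) differentiable (at t)" using assms w unfolding has_pdt_def
    by (metis atLeastAtMost_iff less_eq_real_def)
  then obtain D where D: "((\<lambda>\<tau>. f x \<tau>) has_real_derivative D) (at t)"
    using real_differentiable_def by blast
  have "pdt T f x t = D" unfolding pdt_def w
    using D DERIV_unique by blast
  thus ?thesis using D by simp
qed

lemma mixed_difference_mvt:
  fixes F :: "'a::real_normed_vector \<Rightarrow> real"
  assumes hv: "has_dirderiv v F Fv" and hvw: "has_dirderiv w Fv Fvw" and h: "h > 0"
  shows "\<exists>P. norm (P - x) \<le> h * (norm v + norm w) \<and>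
     F (x + h *\<^sub>R v + h *\<^sub>R w) - F (x + h *\<^sub>R v) - F (x + h *\<^sub>R w) + F x = h * h * Fvw P"
proof -
  define g where "g a = F ((x + h *\<^sub>R w) + a *\<^sub>R v) - F (x + a *\<^sub>R v)" for a
  define g' where "g' a = Fv ((x + h *\<^sub>R w) + a *\<^sub>R v) - Fv (x + a *\<^sub>R v)" for a
  have "\<And>a. 0 \<le> a \<Longrightarrow> a \<le> h \<Longrightarrow> DERIV g a :> g' a"
    unfolding g_def g'_def
    using has_dirderiv_along_line[OF hv, of "x + h *\<^sub>R w"] has_dirderiv_along_line[OF hv, of x]
    by (auto intro!: derivative_intros)
  from MVT2[OF h this] obtain \<xi> where xi: "0 < \<xi>" "\<xi> < h" "g h - g 0 = (h - 0) * g' \<xi>" by blast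
  define k where "k b = Fv ((x + \<xi> *\<^sub>R v) + b *\<^sub>R w)" for b
  have "\<And>b. 0 \<le> b \<Longrightarrow> b \<le> h \<Longrightarrow> DERIV k b :> Fvw ((x + \<xi> *\<^sub>R v) + b *\<^sub>R w)"
    unfolding k_def using has_dirderiv_along_line[OF hvw, of "x + \<xi> *\<^sub>R v"] by auto
  from MVT2[OF h this] obtain \<eta> where eta: "0 < \<eta>" "\<eta> < h"
    "k h - k 0 = (h - 0) * Fvw ((x + \<xi> *\<^sub>R v) + \<eta> *\<^sub>R w)" by blast
  have gk: "g' \<xi> = k h - k 0" unfolding g'_def k_def by (simp add: algebra_simps)
  have "g h - g 0 = F (x + h *\<^sub>R v + h *\<^sub>R w) - F (x + h *\<^sub>R v) - F (x + h *\<^sub>R w) + F x"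
    unfolding g_def by (simp add: algebra_simps)
  moreover have "norm ((x + \<xi> *\<^sub>R v + \<eta> *\<^sub>R w) - x) \<le> h * (norm v + norm w)"
  proof -
    have "norm ((x + \<xi> *\<^sub>R v + \<eta> *\<^sub>R w) - x) \<le> norm (\<xi> *\<^sub>R v) + norm (\<eta> *\<^sub>R w)"
      by (metis add_diff_cancel_left' add.assoc norm_triangle_ineq)
    also have "\<dots> = \<xi> * norm v + \<eta> * norm w" using xi eta by simp
    also have "\<dots> \<le> h * norm v + h * norm w"
      using xi eta by (intro add_mono mult_right_mono) auto
    finally show ?thesis by (simp add: algebra_simps)
  qed
  ultimately show ?thesis using xi(3) gk eta(3) by (metis diff_zero mult.assoc)
qed

text \<open>Schwarz's theorem: the mixed second difference equals \<open>h\<^sup>2\<close> times either mixed derivative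
  at some nearby point, and both are continuous.\<close>

lemma dirderiv_commute:
  fixes F :: "'a::real_normed_vector \<Rightarrow> real"
  assumes hv: "has_dirderiv v F Fv" and hw: "has_dirderiv w F Fw" and hvw: "has_dirderiv w Fv Fvw"
      and hwv: "has_dirderiv v Fw Fwv"
    and c1: "continuous_on UNIV Fvw" and c2: "continuous_on UNIV Fwv"
  shows "Fvw x = Fwv x"
proof (rule ccontr)
  assume ne: "Fvw x \<noteq> Fwv x"
  define d where "d = \<bar>Fvw x - Fwv x\<bar>"
  have d: "d > 0" using ne d_def by simp
  have "continuous (at x) Fvw" using c1 by (simp add: continuous_on_eq_continuous_at)
  then obtain d1 where d1: "d1 > 0" "\<forall>y. dist y x < d1 \<longrightarrow> dist (Fvw y) (Fvw x) < d/2"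
    using d unfolding continuous_at_eps_delta by (meson half_gt_zero)
  have "continuous (at x) Fwv" using c2 by (simp add: continuous_on_eq_continuous_at)
  then obtain d2 where d2: "d2 > 0" "\<forall>y. dist y x < d2 \<longrightarrow> dist (Fwv y) (Fwv x) < d/2"
    using d unfolding continuous_at_eps_delta by (meson half_gt_zero)
  define h where "h = min d1 d2 / (2 * (norm v + norm w + 1))"
  have den: "2 * (norm v + norm w + 1) > 0" by (smt (verit) norm_ge_zero)
  hence hpos: "h > 0" unfolding h_def using d1 d2 by (simp add: divide_pos_pos)
  have hsmall: "h * (norm v + norm w) < min d1 d2"
  proof -
    have "h * (norm v + norm w) \<le> h * (norm v + norm w + 1)" using hpos by simp
    also have "\<dots> = min d1 d2 / 2" unfolding h_def using den by (simp add: field_simps)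
    also have "\<dots> < min d1 d2" using d1(1) d2(1) by (simp add: min_def)
    finally show ?thesis .
  qed
  obtain P1 where P1: "norm (P1 - x) \<le> h * (norm v + norm w)"
    "F (x + h *\<^sub>R v + h *\<^sub>R w) - F (x + h *\<^sub>R v) - F (x + h *\<^sub>R w) + F x = h * h * Fvw P1"
    using mixed_difference_mvt[OF hv hvw hpos] by blast
  obtain P2 where P2: "norm (P2 - x) \<le> h * (norm w + norm v)"
    "F (x + h *\<^sub>R w + h *\<^sub>R v) - F (x + h *\<^sub>R w) - F (x + h *\<^sub>R v) + F x = h * h * Fwv P2"
    using mixed_difference_mvt[OF hw hwv hpos] by blast
  have "h * h * Fvw P1 = h * h * Fwv P2" using P1(2) P2(2) by (simp add: algebra_simps)
  hence eq: "Fvw P1 = Fwv P2" using hpos by simp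
  have "dist P1 x < d1" using P1(1) hsmall by (simp add: dist_norm)
  hence a: "\<bar>Fvw P1 - Fvw x\<bar> < d/2" using d1 by (simp add: dist_real_def)
  have "dist P2 x < d2" using P2(1) hsmall by (simp add: dist_norm algebra_simps)
  hence b: "\<bar>Fwv P2 - Fwv x\<bar> < d/2" using d2 by (simp add: dist_real_def)
  have a': "\<bar>Fwv P2 - Fvw x\<bar> < d/2" using a eq by simp
  have "\<bar>Fvw x - Fwv x\<bar> \<le> \<bar>Fwv P2 - Fvw x\<bar> + \<bar>Fwv P2 - Fwv x\<bar>" by linarith
  hence "d \<le> \<bar>Fwv P2 - Fvw x\<bar> + \<bar>Fwv P2 - Fwv x\<bar>" unfolding d_def .
  also have "\<dots> < d/2 + d/2" using a' b by (rule add_strict_mono)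
  finally have "d < d" by simp
  thus False by simp
qed

lemma has_dirderiv_translate: "has_dirderiv v F F'
    \<Longrightarrow> has_dirderiv v (\<lambda>x. F (x - y)) (\<lambda>x. F' (x - y))"
  unfolding has_dirderiv_def
proof (intro allI)
  fix x assume A: "\<forall>x. ((\<lambda>h. F (x + h *\<^sub>R v)) has_real_derivative F' x) (at 0)"
  have "(\<lambda>h. F (x + h *\<^sub>R v - y)) = (\<lambda>h. F ((x - y) + h *\<^sub>R v))" by (simp add: algebra_simps)
  thus "((\<lambda>h. F (x + h *\<^sub>R v - y)) has_real_derivative F' (x - y)) (at 0)" using A by simp
qed

lemma integrable_compact_support:
  fixes f :: "'a::euclidean_space \<Rightarrow> real"
  assumes "continuous_on UNIV f" "\<And>x. x \<notin> cball c r \<Longrightarrow> f x = 0"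
  shows "integrable lborel f"
proof -
  have "integrable lborel (\<lambda>x. indicator (cball c r) x *\<^sub>R f x)"
    by (rule borel_integrable_compact) (auto intro: continuous_on_subset[OF assms(1)])
  moreover have "(\<lambda>x. indicator (cball c r) x *\<^sub>R f x) = f"
    using assms(2) by (intro ext) (auto simp: indicator_def)
  ultimately show ?thesis by simp
qed

lemma lborel_integral_eq_integral_cbox:
  fixes f :: "'a::euclidean_space \<Rightarrow> real"
  assumes "continuous_on UNIV f" "\<And>x. x \<notin> cball c r \<Longrightarrow> f x = 0" "cball c r \<subseteq> cbox a b"
  shows "(\<integral>x. f x \<partial>lborel) = integral (cbox a b) f"
proof -
  have "(\<integral>x. f x \<partial>lborel) = integral UNIV f"
    using integral_lborel[OF integrable_compact_support[OF assms(1,2)]] by simp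
  also have "\<dots> = integral UNIV (\<lambda>x. if x \<in> cbox a b then f x else 0)"
  proof (intro arg_cong[where f="integral UNIV"] ext)
    fix x
    show "f x = (if x \<in> cbox a b then f x else 0)"
    proof (cases "x \<in> cbox a b")
      case False
      hence "x \<notin> cball c r" using assms(3) by blast
      thus ?thesis using assms(2) False by simp
    qed simp
  qed
  also have "\<dots> = integral (cbox a b) f" by (rule integral_restrict_UNIV)
  finally show ?thesis .
qed

lemma DERIV_locally_zero:
  assumes "((\<lambda>\<tau>. g \<tau>) has_real_derivative D) (at t0)" "open S" "t0 \<in> S" "\<And>\<tau>. \<tau> \<in> S \<Longrightarrow> g \<tau> = 0"
  shows "D = 0"
proof -
  have "((\<lambda>\<tau>. 0::real) has_real_derivative D) (at t0)"
    by (rule has_field_derivative_transform_within_open[OF assms(1) assms(2,3)])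
        (use assms(4) in auto)
  thus ?thesis using DERIV_unique DERIV_const by blast
qed

text \<open>Reduced to Leibniz's rule for the Henstock-Kurzweil integral over a box containing the
  supports.\<close>

lemma has_real_derivative_parametric_integral:
  fixes g g' :: "real \<Rightarrow> 'a::euclidean_space \<Rightarrow> real"
  assumes d: "\<delta> > 0"
    and supp: "\<And>\<tau> x. \<tau> \<in> ball t0 \<delta> \<Longrightarrow> x \<notin> cball c r \<Longrightarrow> g \<tau> x = 0"
    and der: "\<And>\<tau> x. \<tau> \<in> ball t0 \<delta> \<Longrightarrow> ((\<lambda>\<tau>. g \<tau> x) has_real_derivative g' \<tau> x) (at \<tau>)"
    and cg': "continuous_on (ball t0 \<delta> \<times> UNIV) (\<lambda>(\<tau>,x). g' \<tau> x)"
    and cg: "\<And>\<tau>. \<tau> \<in> ball t0 \<delta> \<Longrightarrow> continuous_on UNIV (g \<tau>)"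
  shows "((\<lambda>\<tau>. \<integral>x. g \<tau> x \<partial>lborel) has_real_derivative (\<integral>x. g' t0 x \<partial>lborel)) (at t0)"
proof -
  obtain a where box: "cball c r \<subseteq> cbox (-a) a"
    using bounded_subset_cbox_symmetric[OF bounded_cball] by blast
  have t0: "t0 \<in> ball t0 \<delta>" using d by simp
  have cg't0: "continuous_on UNIV (g' t0)"
  proof -
    have "continuous_on UNIV (\<lambda>x. (\<lambda>(\<tau>,x). g' \<tau> x) (t0, x))"
      by (rule continuous_on_compose2[OF cg']) (use d in \<open>auto intro!: continuous_intros\<close>)
    thus ?thesis by simp
  qed
  have supp': "g' t0 x = 0" if "x \<notin> cball c r" for x
    by (rule DERIV_locally_zero[OF der[OF t0], of "ball t0 \<delta>"]) (use that supp d in auto)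
  have L: "((\<lambda>\<tau>. integral (cbox (-a) a) (g \<tau>)) has_real_derivative integral (cbox (-a) a) (g' t0))
      (at t0 within ball t0 \<delta>)"
  proof (rule leibniz_rule_field_derivative)
    show "\<And>x t. x \<in> ball t0 \<delta> \<Longrightarrow> t \<in> cbox (- a) a \<Longrightarrow>
         ((\<lambda>x. g x t) has_field_derivative g' x t) (at x within ball t0 \<delta>)"
      using der has_field_derivative_at_within by blast
    show "\<And>x. x \<in> ball t0 \<delta> \<Longrightarrow> g x integrable_on cbox (- a) a"
      using cg by (meson integrable_continuous continuous_on_subset subset_UNIV)
    show "continuous_on (ball t0 \<delta> \<times> cbox (- a) a) (\<lambda>(x, t). g' x t)"
      by (rule continuous_on_subset[OF cg']) auto
  qed (use t0 in auto)
  hence L': "((\<lambda>\<tau>. integral (cbox (-a) a) (g \<tau>)) has_real_derivative integral (cbox (-a) a)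
      (g' t0)) (at t0)"
    using at_within_open[OF t0 open_ball] by simp
  have "((\<lambda>\<tau>. \<integral>x. g \<tau> x \<partial>lborel) has_real_derivative integral (cbox (-a) a) (g' t0)) (at t0)"
  proof (rule has_field_derivative_transform_within_open[OF L' open_ball t0])
    fix \<tau> assume "\<tau> \<in> ball t0 \<delta>"
    thus "integral (cbox (- a) a) (g \<tau>) = (\<integral>x. g \<tau> x \<partial>lborel)"
      using lborel_integral_eq_integral_cbox[OF cg[of \<tau>] supp[of \<tau>] box] by simp
  qed
  moreover have "integral (cbox (-a) a) (g' t0) = (\<integral>x. g' t0 x \<partial>lborel)"
    using lborel_integral_eq_integral_cbox[OF cg't0 supp' box] by simp
  ultimately show ?thesis by simp
qed

lemma lborel_integral_translate:
  fixes H :: "'a::euclidean_space \<Rightarrow> real"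
  assumes "continuous_on UNIV H"
  shows "(\<integral>x. H (x + w) \<partial>lborel) = (\<integral>x. H x \<partial>lborel)"
proof -
  have m: "H \<in> borel_measurable borel" using assms by (intro borel_measurable_continuous_onI)
  have "(\<integral>x. H x \<partial>lborel) = (\<integral>x. H x \<partial>(distr lborel borel ((+) w)))"
    by (simp add: lborel_distr_plus)
  also have "\<dots> = (\<integral>x. H (w + x) \<partial>lborel)"
    by (rule integral_distr) (use m in auto)
  finally show ?thesis by (simp add: add.commute)
qed

lemma translate_notin_cball:
  fixes v :: "'a::real_normed_vector"
  assumes "s \<in> ball (0::real) 1" "x \<notin> cball c (r + norm v)"
  shows "x + s *\<^sub>R v \<notin> cball c r"
proof -
  have "norm (s *\<^sub>R v) \<le> norm v" using assms(1) by (simp add: mult_left_le_one_le)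
  moreover have "dist c x \<le> dist c (x + s *\<^sub>R v) + norm (s *\<^sub>R v)"
    using dist_triangle[of c x "x + s *\<^sub>R v"] by (simp add: dist_norm)
  ultimately show ?thesis using assms(2) by simp
qed

text \<open>All translates \<open>H (x + s v)\<close> have the same integral; differentiating in \<open>s\<close> at \<open>0\<close>
  gives \<open>\<integral> H' = 0\<close>.\<close>

lemma integral_dirderiv_eq_0:
  fixes H H' :: "'a::euclidean_space \<Rightarrow> real"
  assumes hH: "has_dirderiv v H H'" and cH: "continuous_on UNIV H" and cH': "continuous_on UNIV H'"
    and supp: "\<And>x. x \<notin> cball c r \<Longrightarrow> H x = 0"
  shows "(\<integral>x. H' x \<partial>lborel) = 0"
proof -
  define g where "g s x = H (x + s *\<^sub>R v)" for s x
  define g' where "g' s x = H' (x + s *\<^sub>R v)" for s x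
  have D: "((\<lambda>s. \<integral>x. g s x \<partial>lborel) has_real_derivative (\<integral>x. g' 0 x \<partial>lborel)) (at 0)"
  proof (rule has_real_derivative_parametric_integral[where \<delta>=1 and c=c and r="r + norm v"])
    fix s x assume "s \<in> ball (0::real) 1" "x \<notin> cball c (r + norm v)"
    hence "x + s *\<^sub>R v \<notin> cball c r" by (rule translate_notin_cball)
    thus "g s x = 0" unfolding g_def using supp by simp
  next
    fix s x
    show "((\<lambda>s. g s x) has_real_derivative g' s x) (at s)"
      unfolding g_def g'_def by (rule has_dirderiv_along_line[OF hH])
  next
    show "continuous_on (ball 0 1 \<times> UNIV) (\<lambda>(s, x). g' s x)"
    proof -
      have "continuous_on UNIV (\<lambda>p::real\<times>'a. H' (snd p + fst p *\<^sub>R v))"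
        by (rule continuous_on_compose2[OF cH']) (auto intro!: continuous_intros)
      hence "continuous_on (ball 0 1 \<times> UNIV) (\<lambda>p::real\<times>'a. H' (snd p + fst p *\<^sub>R v))"
        by (rule continuous_on_subset) auto
      thus ?thesis unfolding g'_def split_beta .
    qed
  next
    fix s :: real
    show "continuous_on UNIV (g s)" unfolding g_def
      by (rule continuous_on_compose2[OF cH]) (auto intro!: continuous_intros)
  qed simp
  have "(\<lambda>s. \<integral>x. g s x \<partial>lborel) = (\<lambda>s. \<integral>x. H x \<partial>lborel)"
    unfolding g_def using lborel_integral_translate[OF cH] by simp
  with D have "((\<lambda>s. \<integral>x. H x \<partial>lborel) has_real_derivative (\<integral>x. H' x \<partial>lborel)) (at 0)"
    by (simp add: g'_def)
  thus ?thesis using DERIV_unique DERIV_const by blast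
qed

lemma has_dirderiv_zero_outside:
  assumes "has_dirderiv v F F'" "\<And>x. x \<notin> cball c r \<Longrightarrow> F x = 0" "x \<notin> cball c r"
  shows "F' x = 0"
  by (rule has_dirderiv_zero_on_open[OF assms(1), of "- cball c r" 0]) (use assms in auto)

lemma integration_by_parts:
  fixes F G :: "'a::euclidean_space \<Rightarrow> real"
  assumes hF: "has_dirderiv v F F'" and hG: "has_dirderiv v G G'"
    and cF: "continuous_on UNIV F" and cF': "continuous_on UNIV F'"
    and cG: "continuous_on UNIV G" and cG': "continuous_on UNIV G'"
    and supp: "\<And>x. x \<notin> cball c r \<Longrightarrow> F x = 0"
  shows "(\<integral>x. F' x * G x \<partial>lborel) = - (\<integral>x. F x * G' x \<partial>lborel)"
proof -
  have supp': "F' x = 0" if "x \<notin> cball c r" for x using has_dirderiv_zero_outside[OF hF supp that] .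
  have i1: "integrable lborel (\<lambda>x. F' x * G x)"
    by (rule integrable_compact_support[of _ c r]) (use supp' continuous_on_mult[OF cF' cG] in auto)
  have i2: "integrable lborel (\<lambda>x. F x * G' x)"
    by (rule integrable_compact_support[of _ c r]) (use supp continuous_on_mult[OF cF cG'] in auto)
  have "(\<integral>x. F' x * G x + F x * G' x \<partial>lborel) = 0"
    by (rule integral_dirderiv_eq_0[OF has_dirderiv_mult[OF hF hG], of c r])
       (use supp continuous_on_mult[OF cF cG]
           continuous_on_add[OF continuous_on_mult[OF cF' cG] continuous_on_mult[OF cF cG']] in
           auto)
  thus ?thesis using Bochner_Integration.integral_add[OF i1 i2] by simp
qed

lemma power2_norm_add_axis:
  fixes z :: "real^'n::finite"
  shows "(norm (z + h *\<^sub>R axis i 1))\<^sup>2 = (norm z)\<^sup>2 + 2 * h * (z $ i) + h\<^sup>2"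
proof -
  have "(norm (z + h *\<^sub>R axis i 1))\<^sup>2 = (z + h *\<^sub>R axis i 1) \<bullet> (z + h *\<^sub>R axis i 1)"
    by (rule power2_norm_eq_inner)
  also have "\<dots> = z \<bullet> z + 2 * h * (z \<bullet> axis i 1) + h * h * (axis i 1 \<bullet> axis i (1::real))"
    by (simp add: inner_add_left inner_add_right inner_commute algebra_simps)
  also have "\<dots> = (norm z)\<^sup>2 + 2 * h * (z $ i) + h\<^sup>2"
    by (simp add: power2_norm_eq_inner inner_axis power2_eq_square[of h])
  finally show ?thesis .
qed

definition rho_heat_dx :: "real^'n::finite \<Rightarrow> real \<Rightarrow> real \<Rightarrow> 'n \<Rightarrow> real^'n \<Rightarrow> real" where
  "rho_heat_dx y s t i x = - rho_heat y s x t * ((x - y) $ i) / (2 * (s - t))"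

definition rho_heat_dxx :: "real^'n::finite \<Rightarrow> real \<Rightarrow> real \<Rightarrow> 'n \<Rightarrow> 'n \<Rightarrow> real^'n \<Rightarrow> real" where
  "rho_heat_dxx y s t i j x = rho_heat y s x t * (((x - y) $ i) * ((x - y) $ j) / (4 * (s - t)\<^sup>2)
      - (if i = j then 1 else 0) / (2 * (s - t)))"

lemma rho_heat_has_dirderiv:
  fixes y :: "real^'n::finite"
  assumes st: "s \<noteq> t"
  shows "has_dirderiv (axis i 1) (\<lambda>x. rho_heat y s x t) (rho_heat_dx y s t i)"
  unfolding has_dirderiv_def rho_heat_dx_def
proof
  fix x :: "real^'n"
  define A where "A = (4 * pi * (s - t)) powr (- (real CARD('n) - 1) / 2)"
  define z where "z = x - y"
  have eq: "(\<lambda>h. rho_heat y s (x + h *\<^sub>R axis i 1) t) =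
      (\<lambda>h. A * exp (- ((norm z)\<^sup>2 + 2 * h * (z $ i) + h\<^sup>2) / (4 * (s - t))))"
    unfolding rho_heat_def A_def z_def
    by (rule ext) (metis (no_types, lifting) add_diff_eq diff_add_eq power2_norm_add_axis)
  have "((\<lambda>h. A * exp (- ((norm z)\<^sup>2 + 2 * h * (z $ i) + h\<^sup>2) / (4 * (s - t)))) has_real_derivative
      A * exp (- ((norm z)\<^sup>2 + 2 * 0 * (z $ i) + 0\<^sup>2) / (4 * (s - t))) *
        (- (2 * (z $ i) + 2 * 0) / (4 * (s - t)))) (at 0)"
    using st by (auto intro!: derivative_eq_intros)
  hence "((\<lambda>h. A * exp (- ((norm z)\<^sup>2 + 2 * h * (z $ i) + h\<^sup>2) / (4 * (s - t)))) has_real_derivative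
      - (A * exp (- (norm z)\<^sup>2 / (4 * (s - t)))) * (z $ i) / (2 * (s - t))) (at 0)"
    by (rule DERIV_cong) (use st in \<open>simp add: field_simps\<close>)
  thus "((\<lambda>h. rho_heat y s (x + h *\<^sub>R axis i 1) t) has_real_derivative
      - rho_heat y s x t * ((x - y) $ i) / (2 * (s - t))) (at 0)"
    unfolding eq by (simp add: rho_heat_def A_def z_def)
qed

lemma coordinate_has_dirderiv:
  fixes y :: "real^'n::finite"
  shows "has_dirderiv (axis j 1) (\<lambda>x. (x - y) $ i) (\<lambda>x. if i = j then 1 else 0)"
  unfolding has_dirderiv_def
proof
  fix x :: "real^'n"
  have "(\<lambda>h. (x + h *\<^sub>R axis j 1 - y) $ i) = (\<lambda>h. (x - y) $ i + h * (if i = j then 1 else 0))"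
    by (rule ext) (simp add: axis_def)
  moreover have "((\<lambda>h. (x - y) $ i + h * (if i = j then 1 else 0)) has_real_derivative (if i
      = j then 1 else 0)) (at 0)"
    by (auto intro!: derivative_eq_intros)
  ultimately show "((\<lambda>h. (x + h *\<^sub>R axis j 1 - y) $ i) has_real_derivative (if i
      = j then 1 else 0)) (at 0)"
    by simp
qed

lemma rho_heat_dx_has_dirderiv:
  assumes st: "s \<noteq> t"
  shows "has_dirderiv (axis j 1) (rho_heat_dx y s t i) (rho_heat_dxx y s t i j)"
proof -
  have h1: "has_dirderiv (axis j 1) (\<lambda>x. (- 1 / (2 * (s - t)))
      * (x - y) $ i) (\<lambda>x. (- 1 / (2 * (s - t))) * (if i = j then 1 else 0))"
    by (rule has_dirderiv_cmult[OF coordinate_has_dirderiv])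
  have "has_dirderiv (axis j 1) (\<lambda>x. rho_heat y s x t * ((- 1 / (2 * (s - t))) * (x - y) $ i))
     (\<lambda>x. rho_heat_dx y s t j x * ((- 1 / (2 * (s - t))) * (x - y) $ i)
         + rho_heat y s x t * ((- 1 / (2 * (s - t))) * (if i = j then 1 else 0)))"
    by (rule has_dirderiv_mult[OF rho_heat_has_dirderiv[OF st] h1])
  moreover have "(\<lambda>x. rho_heat y s x t * ((- 1 / (2 * (s - t))) * (x - y) $ i))
      = rho_heat_dx y s t i"
    unfolding rho_heat_dx_def by (rule ext) simp
  moreover have "(\<lambda>x. rho_heat_dx y s t j x * ((- 1 / (2 * (s - t))) * (x - y) $ i)
      + rho_heat y s x t * ((- 1 / (2 * (s - t))) * (if i = j then 1 else 0)))
     = rho_heat_dxx y s t i j"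
    unfolding rho_heat_dx_def rho_heat_dxx_def
  proof (intro ext)
    fix x
    have u: "s - t \<noteq> 0" using st by simp
    have alg: "(- r * b / (2 * u)) * ((- 1 / (2 * u)) * a) + r * ((- 1 / (2 * u)) * d)
        = r * (a * b / (4 * u\<^sup>2) - d / (2 * u))"
      if "u \<noteq> 0" for r a b d u :: real using that by (simp add: field_simps power2_eq_square)
    show "- rho_heat y s x t * (x - y) $ j / (2 * (s - t)) * (- 1 / (2 * (s - t)) * (x - y) $ i) +
          rho_heat y s x t * (- 1 / (2 * (s - t)) * (if i = j then 1 else 0)) =
          rho_heat y s x t * ((x - y) $ i * (x - y) $ j / (4 * (s - t)\<^sup>2)
              - (if i = j then 1 else 0) / (2 * (s - t)))"
      using alg[OF u, of "rho_heat y s x t" "(x - y) $ j" "(x - y) $ i" "if i = j then 1 else 0"]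
      by simp
  qed
  ultimately show ?thesis by simp
qed

lemma heat_profile_has_derivative:
  fixes u :: real
  assumes u: "u > 0"
  shows "((\<lambda>u. (4 * pi * u) powr a * exp (- N / (4 * u))) has_real_derivative
     (4 * pi * u) powr a * exp (- N / (4 * u)) * (a / u + N / (4 * u\<^sup>2))) (at u)"
proof -
  have pos: "4 * pi * u > 0" using u by simp
  have "((\<lambda>u. (4 * pi * u) powr a * exp (- N / (4 * u))) has_real_derivative
      a * (4 * pi * u) powr (a - 1) * (4 * pi) * exp (- N / (4 * u))
      + (4 * pi * u) powr a * (exp (- N / (4 * u)) * (N / (4 * u\<^sup>2)))) (at u)"
    using u pos
    by (auto intro!: derivative_eq_intros simp: power2_eq_square field_simps)
  moreover have "(4 * pi * u) powr (a - 1) = (4 * pi * u) powr a / (4 * pi * u)"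
    using pos by (simp add: powr_diff)
  ultimately show ?thesis
    by (rule_tac DERIV_cong) (use u pos in \<open>auto simp: field_simps\<close>)
qed

lemma rho_heat_has_time_derivative:
  fixes y :: "real^'n::finite"
  assumes st: "t < s"
  shows "((\<lambda>t. rho_heat y s x t) has_real_derivative
     rho_heat y s x t * ((real CARD('n) - 1) / (2 * (s - t))
         - (norm (x - y))\<^sup>2 / (4 * (s - t)\<^sup>2))) (at t)"
proof -
  define a where "a = - (real CARD('n) - 1) / 2"
  define N where "N = (norm (x - y))\<^sup>2"
  have u: "s - t > 0" using st by simp
  have d1: "((\<lambda>u. (4 * pi * u) powr a * exp (- N / (4 * u))) has_real_derivative
     (4 * pi * (s - t)) powr a * exp (- N / (4 * (s - t)))
         * (a / (s - t) + N / (4 * (s - t)\<^sup>2))) (at (s - t))"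
    by (rule heat_profile_has_derivative[OF u])
  have d2: "((\<lambda>t. s - t) has_real_derivative -1) (at t)" by (auto intro!: derivative_eq_intros)
  have D: "((\<lambda>t. (4 * pi * (s - t)) powr a * exp (- N / (4 * (s - t)))) has_real_derivative
     (4 * pi * (s - t)) powr a * exp (- N / (4 * (s - t)))
         * ((real CARD('n) - 1) / (2 * (s - t)) - N / (4 * (s - t)\<^sup>2))) (at t)"
    by (rule DERIV_cong[OF DERIV_chain2[OF d1 d2]]) (use st in \<open>simp add: a_def field_simps\<close>)
  show ?thesis unfolding rho_heat_def a_def[symmetric] N_def[symmetric] by (rule D)
qed

lemma rho_heat_pos: "t < s \<Longrightarrow> rho_heat y s x t > 0"
  unfolding rho_heat_def by simp

lemma continuous_on_rho_heat: "continuous_on UNIV (\<lambda>x. rho_heat y s x t)"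
  unfolding rho_heat_def divide_inverse by (intro continuous_intros)

text \<open>Glaeser's inequality: compare \<open>g\<close> with the parabola \<open>g 0 + h g' 0 + M h\<^sup>2/2\<close> and evaluate at
  \<open>h = - g' 0 / M\<close>.\<close>

lemma glaeser_inequality:
  fixes g g1 g2 :: "real \<Rightarrow> real"
  assumes nn: "\<And>h. g h \<ge> 0"
    and d1: "\<And>h. (g has_real_derivative g1 h) (at h)"
    and d2: "\<And>h. (g1 has_real_derivative g2 h) (at h)"
    and bd: "\<And>h. \<bar>g2 h\<bar> \<le> M" and M: "M > 0"
  shows "(g1 0)\<^sup>2 \<le> 2 * M * g 0"
proof -
  define k where "k h = g 0 + h * g1 0 + M * h\<^sup>2 / 2 - g h" for h
  define k1 where "k1 h = g1 0 + M * h - g1 h" for h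
  have dk: "(k has_real_derivative k1 h) (at h)" for h
    unfolding k_def k1_def by (auto intro!: derivative_eq_intros d1 simp: power2_eq_square)
  have dk1: "(k1 has_real_derivative (M - g2 h)) (at h)" for h
    unfolding k1_def by (auto intro!: derivative_eq_intros d2)
  have k1pos: "k1 h \<ge> 0" if "h \<ge> 0" for h
  proof -
    have "k1 0 \<le> k1 h"
      by (rule deriv_nonneg_imp_mono[OF dk1]) (use bd that in \<open>auto simp: abs_le_iff\<close>)
    thus ?thesis by (simp add: k1_def)
  qed
  have k1neg: "k1 h \<le> 0" if "h \<le> 0" for h
  proof -
    have "k1 h \<le> k1 0"
      by (rule deriv_nonneg_imp_mono[OF dk1]) (use bd that in \<open>auto simp: abs_le_iff\<close>)
    thus ?thesis by (simp add: k1_def)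
  qed
  have kpos: "k h \<ge> 0" for h
  proof (cases "h \<ge> 0")
    case True
    have "k 0 \<le> k h"
      by (rule deriv_nonneg_imp_mono[OF dk]) (use True k1pos in auto)
    thus ?thesis by (simp add: k_def)
  next
    case False
    have "k 0 \<le> k h"
      by (rule deriv_nonpos_imp_antimono[OF dk]) (use False k1neg in auto)
    thus ?thesis by (simp add: k_def)
  qed
  define h where "h = - g1 0 / M"
  have "0 \<le> g h" by (rule nn)
  also have "g h \<le> g 0 + h * g1 0 + M * h\<^sup>2 / 2" using kpos[of h] by (simp add: k_def)
  also have "\<dots> = g 0 - (g1 0)\<^sup>2 / (2 * M)" unfolding h_def using M
    by (simp add: field_simps power2_eq_square)
  finally show ?thesis using M by (simp add: field_simps)
qed

lemma bounded_compact_support: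
  fixes f :: "'a::euclidean_space \<Rightarrow> real"
  assumes "continuous_on UNIV f" "\<And>z. z \<notin> cball c r \<Longrightarrow> f z = 0"
  shows "\<exists>M\<ge>0. \<forall>z. \<bar>f z\<bar> \<le> M"
proof -
  have "compact (f ` cball c r)"
    by (rule compact_continuous_image[OF continuous_on_subset[OF assms(1)]]) auto
  then obtain M where M: "\<forall>w\<in>f ` cball c r. \<bar>w\<bar> \<le> M"
    using compact_imp_bounded bounded_iff by (metis real_norm_def)
  have "\<bar>f z\<bar> \<le> max M 0" for z
    using M assms(2)[of z] by (cases "z \<in> cball c r") (auto simp: le_max_iff_disj)
  thus ?thesis by (intro exI[of _ "max M 0"]) auto
qed

definition kernel_const :: "nat \<Rightarrow> real" where
  "kernel_const n = 2 + 2 * (128 * (real n + 1)) ^ (n + 1)"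

lemma kernel_const_ge_2: "kernel_const n \<ge> 2"
  unfolding kernel_const_def by simp

lemma power_mult_exp_le:
  fixes w :: real and m :: nat
  assumes "w \<ge> 0" "m > 0"
  shows "w ^ m * exp (- w / 128) \<le> (128 * real m) ^ m"
proof -
  have "(1 + (w / 128) / real m) ^ m \<le> exp (w / 128)"
    by (rule exp_ge_one_plus_x_over_n_power_n) (use assms in auto)
  moreover have "(w / (128 * real m)) ^ m \<le> (1 + (w / 128) / real m) ^ m"
    by (rule power_mono) (use assms in auto)
  ultimately have "(w / (128 * real m)) ^ m \<le> exp (w / 128)" by linarith
  hence "w ^ m / (128 * real m) ^ m \<le> exp (w / 128)" by (simp add: power_divide)
  hence "w ^ m \<le> (128 * real m) ^ m * exp (w / 128)" using assms by (simp add: field_simps)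
  hence "w ^ m * exp (- w / 128) \<le> (128 * real m) ^ m * exp (w / 128) * exp (- w / 128)"
    by (rule mult_right_mono) simp
  also have "\<dots> = (128 * real m) ^ m" by (simp add: exp_minus_inverse mult.assoc flip: exp_add)
  finally show ?thesis .
qed

lemma heat_prefactor_bound:
  fixes \<tau> :: real and n :: nat
  assumes tau: "\<tau> > 0" and n: "n \<ge> 1"
  shows "(1 + 1 / \<tau>) * (4 * pi * \<tau>) powr (- (real n - 1) / 2) * exp (- 1 / (128 * \<tau>))
     \<le> kernel_const n"
proof -
  define k where "k = (real n - 1) / 2"
  have k: "0 \<le> k" "k \<le> real n" using n unfolding k_def by auto
  define P where "P = (4 * pi * \<tau>) powr (- k)"
  define E where "E = exp (- 1 / (128 * \<tau>))"
  have P0: "P \<ge> 0" unfolding P_def by simp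
  have minus_k: "- (real n - 1) / 2 = - k" unfolding k_def by (simp add: field_simps)
  have "(1 + 1 / \<tau>) * P * E \<le> kernel_const n"
  proof (cases "\<tau> \<ge> 1")
    case True
    have "1 \<le> 4 * pi * \<tau>" using mult_left_mono[OF True, of "4 * pi"] pi_gt3 by linarith
    hence "1 \<le> (4 * pi * \<tau>) powr k" by (rule ge_one_powr_ge_zero) (use k in auto)
    hence "P \<le> 1" unfolding P_def by (auto simp: powr_minus inverse_le_1_iff)
    moreover have "E \<le> 1" "1 + 1 / \<tau> \<le> 2" unfolding E_def using True by auto
    ultimately have "(1 + 1 / \<tau>) * P * E \<le> 2 * 1 * 1"
      using P0 tau by (intro mult_mono) (auto simp: E_def)
    thus ?thesis using kernel_const_ge_2[of n] by simp
  next
    case False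
    define w where "w = 1 / \<tau>"
    have w: "w > 1" unfolding w_def using False tau by (simp add: field_simps)
    have "1 \<le> (4 * pi) powr k" by (rule ge_one_powr_ge_zero) (use pi_gt3 k in auto)
    hence "P \<le> \<tau> powr (- k)"
      unfolding P_def using tau by (simp add: powr_mult powr_minus field_simps)
    also have "\<tau> powr (- k) = w powr k"
      unfolding w_def using tau by (simp add: powr_minus powr_divide inverse_eq_divide)
    also have "\<dots> \<le> w ^ n" using powr_mono[of k "real n" w] k w by (simp add: powr_realpow)
    finally have Pw: "P \<le> w ^ n" .
    have "1 + 1 / \<tau> \<le> 2 * w" using w unfolding w_def by simp
    hence "(1 + 1 / \<tau>) * P * E \<le> (2 * w) * w ^ n * E"
      using Pw P0 w unfolding E_def by (intro mult_right_mono mult_mono) auto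
    also have "\<dots> = 2 * (w ^ (n + 1) * exp (- w / 128))"
      unfolding E_def w_def by (simp add: field_simps)
    also have "\<dots> \<le> 2 * (128 * real (n + 1)) ^ (n + 1)"
      using power_mult_exp_le[of w "n + 1"] w by simp
    also have "\<dots> \<le> kernel_const n" unfolding kernel_const_def by (simp add: add.commute)
    finally show ?thesis .
  qed
  thus ?thesis unfolding P_def E_def minus_k .
qed

text \<open>On \<open>|x| \<ge> 1/4\<close> the Gaussian factor is at most \<open>exp (-1/(64 \<tau>))\<close>; half of this exponent
  absorbs the blow-up of the prefactor as \<open>\<tau> \<rightarrow> 0\<close>, which is why \<open>1/128\<close> appears.\<close>

lemma heat_kernel_tail_bound:
  fixes \<tau> :: real and n :: nat
  assumes "\<tau> > 0" "n \<ge> 1"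
  shows "(1 + 1 / \<tau>) * (4 * pi * \<tau>) powr (- (real n - 1) / 2) * exp (- 1 / (64 * \<tau>))
     \<le> kernel_const n * exp (- 1 / (128 * \<tau>))"
proof -
  have "exp (- 1 / (64 * \<tau>)) = exp (- 1 / (128 * \<tau>)) * exp (- 1 / (128 * \<tau>))"
    by (simp flip: exp_add)
  thus ?thesis
    using mult_right_mono[OF heat_prefactor_bound[OF assms], of "exp (- 1 / (128 * \<tau>))"]
    by (simp add: mult.assoc)
qed

lemma cont_Q_slice:
  assumes "cont_Q T g" "t \<in> {0..T}"
  shows "continuous_on UNIV (\<lambda>x. g x t)"
proof -
  have "continuous_on UNIV (\<lambda>x. (\<lambda>p. g (fst p) (snd p)) (x, t))"
    by (rule continuous_on_compose2[OF assms(1)[unfolded cont_Q_def]])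
        (use assms(2) in \<open>auto intro!: continuous_intros\<close>)
  thus ?thesis by simp
qed

lemma cont_Q_swap:
  assumes "cont_Q T g" "S \<subseteq> {0..T}"
  shows "continuous_on (S \<times> UNIV) (\<lambda>p. g (snd p) (fst p))"
proof -
  have "continuous_on (S \<times> UNIV) (\<lambda>p. (\<lambda>p. g (fst p) (snd p)) (snd p, fst p))"
    by (rule continuous_on_compose2[OF assms(1)[unfolded cont_Q_def]])
        (use assms(2) in \<open>auto intro!: continuous_intros\<close>)
  thus ?thesis by simp
qed

lemma dens_t_ibp_algebra:
  fixes ep vv G D X Y ft R Dl dW Rt ee S L S1 S2 :: real
  assumes d: "ep * vv * G = D" and e: "ep * X - Y = D"
    and f: "- ep * ft * (R * vv) = - ep * ft * R * Dl + R * (dW * ft / ep)"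
    and g: "ep * S1 = R * (ep * S2)"
  shows "(Rt * ee + R * (ep * S2 + dW * ft / ep)) - (Rt * ee - ep * ft * (G + R * vv)
      - ep * vv * G - ep * S + L * ee)
     = ep * (S1 + ft * (G + R * Dl)) + (ep * S + ep * X) - (L * ee + Y)"
proof -
  define Q where "Q = dW * ft / ep"
  have f': "ep * ft * (R * vv) = ep * ft * R * Dl - R * Q" using f unfolding Q_def by linarith
  have 1: "Rt * ee + R * (ep * S2 + Q) - (Rt * ee - ep * ft * (G + R * vv) - ep * vv * G - ep * S
      + L * ee)
      = R * (ep * S2) + R * Q + ep * ft * G + ep * ft * (R * vv) + ep * vv * G + ep * S - L * ee"
    by (simp add: algebra_simps)
  have 2: "ep * (S1 + ft * (G + R * Dl)) + (ep * S + ep * X) - (L * ee + Y)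
      = ep * S1 + ep * ft * G + ep * ft * R * Dl + ep * S + ep * X - L * ee - Y"
    by (simp add: algebra_simps)
  show ?thesis unfolding Q_def[symmetric] 1 2 using d e g f' by linarith
qed

text \<open>Pointwise core of Huisken's monotonicity computation. Here \<open>rho\<close> and \<open>eta\<close> are the values
  of the heat kernel and of the cutoff, \<open>g2 = |\<nabla>\<phi>|\<^sup>2\<close>, \<open>z = (x - y) \<cdot> \<nabla>\<phi>\<close>, \<open>v = \<Delta>\<phi> - W'(\<phi>)/\<epsilon>\<^sup>2\<close>,
  \<open>b = u \<cdot> \<nabla>\<phi>\<close>, \<open>A = \<nabla>rho \<cdot> \<nabla>\<phi>\<close>, \<open>B = \<nabla>eta \<cdot> \<nabla>\<phi>\<close> and \<open>H = \<nabla>\<^sup>2rho(\<nabla>\<phi>, \<nabla>\<phi>)\<close>.\<close>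

lemma completed_square_identity:
  fixes ep rho eta tau e xi g2 w b v A B z H :: real
  assumes rho: "rho > 0" and eta: "eta > 0" and tau: "tau > 0"
    and e: "e = ep * g2 / 2 + w" and xi: "xi = ep * g2 / 2 - w"
    and A: "A = - rho * z / (2 * tau)" and H: "H = rho * (z\<^sup>2 / (4 * tau\<^sup>2) - g2 / (2 * tau))"
  defines "c \<equiv> (b * rho * eta - 2 * (eta * A + rho * B)) / (2 * rho * eta)"
  shows "eta * rho * (- 1 / (2 * tau)) * e - ep * (v - b) * (eta * A + rho * B + rho * eta * v)
      - ep * v * (eta * A + rho * B) - ep * (eta * H + 2 * (A * B))
    = - ep * (rho * eta) * (v - c)\<^sup>2 + ep * (rho * eta) * b\<^sup>2 / 4 + xi * (rho * eta) / (2 * tau)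
      + ep * rho * B\<^sup>2 / eta"
proof -
  define rt where "rt = rho * eta"
  have rt: "rt > 0" unfolding rt_def using rho eta by simp
  define G where "G = eta * A + rho * B"
  have c: "c = (b * rt - 2 * G) / (2 * rt)" unfolding c_def rt_def G_def by (simp add: mult.assoc)
  have s1: "- ep * (v - b) * (eta * A + rho * B + rho * eta * v) - ep * v * (eta * A + rho * B)
      = - ep * rt * v\<^sup>2 + ep * v * (b * rt - 2 * G) + ep * b * G"
    unfolding G_def rt_def by (simp add: algebra_simps power2_eq_square)
  have s2: "- ep * rt * v\<^sup>2 + ep * v * (b * rt - 2 * G)
      = - ep * rt * (v - c)\<^sup>2 + ep * (b * rt - 2 * G)\<^sup>2 / (4 * rt)"
    unfolding c using rt by (simp add: field_simps power2_eq_square)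
  have s3: "ep * (b * rt - 2 * G)\<^sup>2 / (4 * rt) + ep * b * G = ep * rt * b\<^sup>2 / 4 + ep * (G\<^sup>2 / rt)"
    using rt by (simp add: field_simps power2_eq_square)
  have s4: "G\<^sup>2 / rt = eta * A\<^sup>2 / rho + 2 * (A * B) + rho * B\<^sup>2 / eta"
    unfolding G_def rt_def using rho eta by (simp add: field_simps power2_eq_square)
  have s5: "eta * A\<^sup>2 / rho - eta * H = eta * rho * g2 / (2 * tau)"
    unfolding A H using rho tau by (simp add: field_simps power2_eq_square)
  have s6: "eta * rho * (- 1 / (2 * tau)) * e + ep * (eta * rho * g2 / (2 * tau))
      = xi * rt / (2 * tau)"
    unfolding e xi rt_def using tau by (simp add: field_simps)
  have "ep * (G\<^sup>2 / rt) - ep * (eta * H + 2 * (A * B))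
      = ep * (eta * rho * g2 / (2 * tau)) + ep * rho * B\<^sup>2 / eta"
    unfolding s4 s5[symmetric] by (simp add: algebra_simps)
  thus ?thesis using s1 s2 s3 s6 unfolding rt_def by linarith
qed

lemma completed_square_bound:
  fixes ep rho eta tau e xi g2 w u2 b v A B z H :: real
  assumes ep: "ep > 0" and rho: "rho > 0" and eta: "eta \<ge> 0" and tau: "tau > 0"
    and e: "e = ep * g2 / 2 + w" and xi: "xi = ep * g2 / 2 - w" and w: "w \<ge> 0"
    and u2: "u2 \<ge> 0" and b: "b\<^sup>2 \<le> u2 * g2"
    and A: "A = - rho * z / (2 * tau)" and H: "H = rho * (z\<^sup>2 / (4 * tau\<^sup>2) - g2 / (2 * tau))"
    and B0: "eta = 0 \<Longrightarrow> B = 0"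
  shows "eta * rho * (- 1 / (2 * tau)) * e - ep * (v - b) * (eta * A + rho * B + rho * eta * v)
      - ep * v * (eta * A + rho * B) - ep * (eta * H + 2 * (A * B))
    \<le> rho * eta * u2 * e / 2 + xi * (rho * eta) / (2 * tau)
      + (if eta > 0 then ep * rho * B\<^sup>2 / eta else 0)"
proof (cases "eta > 0")
  case False
  thus ?thesis using eta B0 by simp
next
  case True
  have "ep * b\<^sup>2 \<le> ep * (u2 * g2)" using b ep by simp
  also have "\<dots> \<le> 2 * u2 * e" unfolding e using u2 w by (simp add: algebra_simps)
  finally have "(rho * eta) / 4 * (ep * b\<^sup>2) \<le> (rho * eta) / 4 * (2 * u2 * e)"
    using rho True by (intro mult_left_mono) auto
  hence "ep * (rho * eta) * b\<^sup>2 / 4 \<le> rho * eta * u2 * e / 2" by (simp add: algebra_simps)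
  moreover have "- ep * (rho * eta) * (v - c)\<^sup>2 \<le> 0" for c using ep rho True by simp
  ultimately show ?thesis
    unfolding completed_square_identity[OF rho True tau e xi A H] if_P[OF True]
    by (smt (verit) add_mono)
qed

lemma power2_norm_vec: "(norm (z::real^'n::finite))\<^sup>2 = (\<Sum>j\<in>UNIV. (z $ j)\<^sup>2)"
  unfolding power2_norm_eq_inner inner_vec_def by (simp add: power2_eq_square)

lemma sum_product_square:
  fixes a :: "'n::finite \<Rightarrow> real"
  shows "(\<Sum>i\<in>(UNIV::'n::finite set). \<Sum>j\<in>UNIV. a i * a j) = (\<Sum>i\<in>UNIV. a i)\<^sup>2"
proof -
  have "(\<Sum>i\<in>UNIV. a i)\<^sup>2 = (\<Sum>i\<in>UNIV. a i) * (\<Sum>i\<in>UNIV. a i)" by (rule power2_eq_square)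
  also have "\<dots> = (\<Sum>i\<in>UNIV. \<Sum>j\<in>UNIV. a i * a j)" by (rule sum_product)
  finally show ?thesis by simp
qed

lemma sum_product_delta:
  fixes p :: "'n::finite \<Rightarrow> real"
  shows "(\<Sum>i\<in>(UNIV::'n::finite set). \<Sum>j\<in>UNIV. (if j = i then 1 else 0) * (p i * p j))
    = (\<Sum>i\<in>UNIV. (p i)\<^sup>2)"
proof -
  have "(\<Sum>j\<in>UNIV. (if j = i then 1 else 0) * (p i * p j)) = (p i)\<^sup>2" for i :: 'n
  proof -
    have "(\<Sum>j\<in>UNIV. (if j = i then 1 else 0) * (p i * p j))
        = (\<Sum>j\<in>UNIV. if j = i then p i * p j else 0)"
      by (rule sum.cong) auto
    also have "\<dots> = p i * p i" by (simp add: sum.delta)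
    finally show ?thesis by (simp add: power2_eq_square)
  qed
  thus ?thesis by simp
qed

lemma dens_ibp_split_algebra:
  fixes ep ft GG R vv Rt ee S LL hn r A B H HE CC DE DD N nn tt b :: real
  assumes "GG = hn * A + r * B" "R = r * hn" "S = hn * H + 2 * (A * B) + r * HE"
    "LL = hn * DD + 2 * CC + r * DE" "ft = vv - b"
    "Rt = r * ((nn - 1) / (2 * tt) - N / (4 * tt\<^sup>2)) * hn"
    "DD = r * (N / (4 * tt\<^sup>2) - nn / (2 * tt))"
  shows "Rt * ee - ep * ft * (GG + R * vv) - ep * vv * GG - ep * S + LL * ee
    = (hn * r * (- 1 / (2 * tt)) * ee - ep * (vv - b) * (hn * A + r * B + r * hn * vv)
        - ep * vv * (hn * A + r * B) - ep * (hn * H + 2 * (A * B)))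
      + (- ep * (r * HE) + (2 * CC + r * DE) * ee)"
proof -
  have "Rt * ee + hn * DD * ee = hn * r * (- 1 / (2 * tt)) * ee"
    unfolding assms(6,7)
    by (simp add: algebra_simps add_divide_distrib[symmetric] diff_divide_distrib[symmetric])
  thus ?thesis unfolding assms(1-5) by (simp add: algebra_simps)
qed

lemma smooth_fun_continuous: "smooth_fun f \<Longrightarrow> continuous_on UNIV f"
  unfolding smooth_fun_def by (auto dest: spec[of _ "[]"])

lemma iterated_deriv_imp_C1:
  fixes W :: "real \<Rightarrow> real"
  assumes "\<forall>k<m. \<forall>x. ((deriv ^^ k) W has_real_derivative (deriv ^^ Suc k) W x) (at x)" "2 \<le> m"
  shows "\<forall>x. (W has_real_derivative deriv W x) (at x)" "continuous_on UNIV (deriv W)"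
proof -
  show "\<forall>x. (W has_real_derivative deriv W x) (at x)"
    using assms(1)[THEN spec, of 0] assms(2) by simp
  have "(deriv W has_real_derivative (deriv ^^ 2) W x) (at x)" for x
    using assms(1)[THEN spec, of 1] assms(2) by (simp add: numeral_2_eq_2)
  thus "continuous_on UNIV (deriv W)"
    by (meson DERIV_isCont continuous_at_imp_continuous_on)
qed

definition monotonicity_const :: "nat \<Rightarrow> real \<Rightarrow> real \<Rightarrow> real" where
  "monotonicity_const n M1 M2 =
     (4 * real n * (M2 + 1) + real n * M1 + 3 * real n * M2) * kernel_const n"

locale cutoff =
  fixes \<eta> :: "real^'n::finite \<Rightarrow> real"
  assumes smooth: "smooth_fun \<eta>"
    and supp: "\<exists>r<1/2. \<forall>x. r \<le> norm x \<longrightarrow> \<eta> x = 0"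
    and bounds: "\<forall>x. 0 \<le> \<eta> x \<and> \<eta> x \<le> 1"
    and one: "\<forall>x. norm x < 1/4 \<longrightarrow> \<eta> x = 1"
begin

definition eta_dx :: "'n \<Rightarrow> real^'n \<Rightarrow> real" where "eta_dx i = dirpd (axis i 1) \<eta>"
definition eta_dxx :: "'n \<Rightarrow> 'n \<Rightarrow> real^'n \<Rightarrow> real" where
  "eta_dxx i j = dirpd (axis j 1) (dirpd (axis i 1) \<eta>)"

lemma continuous_eta: "continuous_on UNIV \<eta>"
  and eta_line_differentiable: "v \<in> Basis \<Longrightarrow> (\<lambda>h. \<eta> (z + h *\<^sub>R v)) differentiable (at 0)"
  using smooth[unfolded smooth_fun_def, rule_format, of "[]"] by auto

lemma eta_dx_regular: "continuous_on UNIV (eta_dx i)"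
  "\<And>v z. v \<in> Basis \<Longrightarrow> (\<lambda>h. eta_dx i (z + h *\<^sub>R v)) differentiable (at 0)"
  using smooth[unfolded smooth_fun_def, rule_format, of "[axis i 1]"] by (auto simp: eta_dx_def)

lemma continuous_eta_dxx: "continuous_on UNIV (eta_dxx i j)"
  using smooth[unfolded smooth_fun_def, rule_format, of "[axis j 1, axis i 1]"]
  by (auto simp: eta_dxx_def)

lemma eta_has_dirderiv: "has_dirderiv (axis i 1) \<eta> (eta_dx i)"
  unfolding eta_dx_def by (rule has_dirderiv_dirpd) (use eta_line_differentiable in auto)

lemma eta_dx_has_dirderiv: "has_dirderiv (axis j 1) (eta_dx i) (eta_dxx i j)"
proof -
  have "has_dirderiv (axis j 1) (eta_dx i) (dirpd (axis j 1) (eta_dx i))"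
    by (rule has_dirderiv_dirpd) (use eta_dx_regular in auto)
  thus ?thesis by (simp add: eta_dxx_def eta_dx_def)
qed

lemma eta_nonneg: "\<eta> x \<ge> 0" using bounds by auto

lemma eta_derivs_vanish:
  assumes "norm z < 1/4 \<or> norm z \<ge> 1/2"
  shows "eta_dx i z = 0" "eta_dxx i j z = 0"
proof -
  obtain r where r: "r < 1/2" "\<forall>x. r \<le> norm x \<longrightarrow> \<eta> x = 0" using supp by blast
  define U where "U = (if norm z < 1/4 then ball (0::real^'n) (1/4) else {x::real^'n. r < norm x})"
  define c where "c = (if norm z < 1/4 then 1 else (0::real))"
  have U: "open U" "z \<in> U" unfolding U_def using assms r(1)
    by (auto intro!: open_Collect_less continuous_intros)
  have cU: "\<forall>x\<in>U. \<eta> x = c" unfolding U_def c_def using one r(2) by auto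
  have e1: "\<forall>x\<in>U. eta_dx i x = 0" using has_dirderiv_zero_on_open[OF eta_has_dirderiv U(1) cU]
    by blast
  show "eta_dx i z = 0" using e1 U by blast
  show "eta_dxx i j z = 0" using has_dirderiv_zero_on_open[OF eta_dx_has_dirderiv U(1) e1 U(2)] .
qed

lemma eta_dx_bounded: "\<exists>M1\<ge>0. \<forall>i z. \<bar>eta_dx i z\<bar> \<le> M1"
proof -
  obtain M where M: "M \<ge> 0" "\<forall>z. \<bar>\<Sum>i\<in>UNIV. \<bar>eta_dx i z\<bar>\<bar> \<le> M"
    using bounded_compact_support[of "\<lambda>z. \<Sum>i\<in>UNIV. \<bar>eta_dx i z\<bar>" 0 "1/2"]
      eta_derivs_vanish(1) by (force intro!: continuous_intros eta_dx_regular)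
  have "\<bar>eta_dx i z\<bar> \<le> M" for i z
  proof -
    have "\<bar>eta_dx i z\<bar> \<le> (\<Sum>i\<in>UNIV. \<bar>eta_dx i z\<bar>)" by (rule member_le_sum) auto
    thus ?thesis using M(2)[rule_format, of z] by simp
  qed
  thus ?thesis using M(1) by blast
qed

lemma eta_dxx_bounded: "\<exists>M2\<ge>0. \<forall>i j z. \<bar>eta_dxx i j z\<bar> \<le> M2"
proof -
  obtain M where M: "M \<ge> 0" "\<forall>z. \<bar>\<Sum>i\<in>UNIV. \<Sum>j\<in>UNIV. \<bar>eta_dxx i j z\<bar>\<bar> \<le> M"
    using bounded_compact_support[of "\<lambda>z. \<Sum>i\<in>UNIV. \<Sum>j\<in>UNIV. \<bar>eta_dxx i j z\<bar>" 0 "1/2"]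
      eta_derivs_vanish(2) by (force intro!: continuous_intros continuous_eta_dxx)
  have "\<bar>eta_dxx i j z\<bar> \<le> M" for i j z
  proof -
    have "\<bar>eta_dxx i j z\<bar> \<le> (\<Sum>j\<in>UNIV. \<bar>eta_dxx i j z\<bar>)" by (rule member_le_sum) auto
    also have "\<dots> \<le> (\<Sum>i\<in>UNIV. \<Sum>j\<in>UNIV. \<bar>eta_dxx i j z\<bar>)"
      by (rule member_le_sum[where f="\<lambda>i. \<Sum>j\<in>UNIV. \<bar>eta_dxx i j z\<bar>"]) (auto intro: sum_nonneg)
    finally show ?thesis using M(2)[rule_format, of z] by simp
  qed
  thus ?thesis using M(1) by blast
qed

lemma eta_dx_sq_le:
  assumes M2: "\<forall>i j z. \<bar>eta_dxx i j z\<bar> \<le> M2"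
  shows "(eta_dx i z)\<^sup>2 \<le> 2 * (M2 + 1) * \<eta> z"
proof -
  have M2nn: "M2 \<ge> 0" using M2 by (meson abs_ge_zero order_trans)
  have "(eta_dx i (z + 0 *\<^sub>R axis i 1))\<^sup>2 \<le> 2 * (M2 + 1) * \<eta> (z + 0 *\<^sub>R axis i 1)"
    using M2 M2nn
    by (intro glaeser_inequality[of _ _ "\<lambda>h. eta_dxx i i (z + h *\<^sub>R axis i 1)" "M2 + 1"]
        eta_nonneg
        has_dirderiv_along_line[OF eta_has_dirderiv] has_dirderiv_along_line[OF eta_dx_has_dirderiv])
      (auto intro: add_increasing2 order_trans)
  thus ?thesis by simp
qed

end

locale localized_energy = cutoff \<eta> for \<eta> :: "real^'n::finite \<Rightarrow> real" +
  fixes M1 M2 :: real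
    and W :: "real \<Rightarrow> real" and \<epsilon> T :: real
    and u :: "real^'n \<Rightarrow> real \<Rightarrow> real^'n" and \<phi> :: "real^'n \<Rightarrow> real \<Rightarrow> real"
    and y :: "real^'n" and s t :: real
  assumes M1: "\<forall>i z. \<bar>eta_dx i z\<bar> \<le> M1" and M2: "\<forall>i j z. \<bar>eta_dxx i j z\<bar> \<le> M2"
    and W_nonneg: "\<forall>x. 0 \<le> W x"
    and W_has_deriv: "\<forall>x. (W has_real_derivative deriv W x) (at x)"
    and continuous_deriv_W: "continuous_on UNIV (deriv W)"
    and eps: "0 < \<epsilon>"
    and u_cont: "\<forall>i. continuous_on UNIV (\<lambda>z::(real^'n) \<times> real. u (fst z) (snd z) $ i)"
    and reg: "phase_regular T \<phi>"
    and pde: "\<forall>x. \<forall>t\<in>{0..T}. pdt T \<phi> x t + (\<Sum>i\<in>UNIV. u x t $ i * pdx i \<phi> x t)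
              = (\<Sum>i\<in>UNIV. pdx i (pdx i \<phi>) x t) - deriv W (\<phi> x t) / \<epsilon>\<^sup>2"
    and t0: "0 < t" and ts: "t < s" and tT: "t < T"
begin

definition "\<tau>0 = s - t"
definition "kern x = rho_heat y s x t"
definition "eta_y x = \<eta> (x - y)"
definition "eta_y_dx i x = eta_dx i (x - y)"
definition "eta_y_dxx i j x = eta_dxx i j (x - y)"
definition "wgt x = kern x * eta_y x"
definition "wgt_dx j x = rho_heat_dx y s t j x * eta_y x + kern x * eta_y_dx j x"
definition "wgt_dxx j i x = rho_heat_dxx y s t j i x * eta_y x
    + rho_heat_dx y s t j x * eta_y_dx i x + rho_heat_dx y s t i x * eta_y_dx j x
    + kern x * eta_y_dxx j i x"
definition "grad i x = pdx i \<phi> x t"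
definition "hess i j x = pdx j (pdx i \<phi>) x t"
definition "grad_t i x = pdt T (pdx i \<phi>) x t"
definition "phi_t x = pdt T \<phi> x t"
definition "energy x = e_eps W \<epsilon> \<phi> x t"
definition "dW x = deriv W (\<phi> x t)"

lemma tau0_pos: "\<tau>0 > 0" using ts by (simp add: \<tau>0_def)
lemma t_mem: "t \<in> {0..T}" using t0 tT by simp

lemma phi_regular:
  "cont_Q T \<phi>" "has_pdx i \<phi> T" "cont_Q T (pdx i \<phi>)"
  "has_pdx j (pdx i \<phi>) T" "cont_Q T (pdx j (pdx i \<phi>))"
  "has_pdt T \<phi>" "cont_Q T (pdt T \<phi>)" "has_pdt T (pdx i \<phi>)" "cont_Q T (pdt T (pdx i \<phi>))"
  using reg unfolding phase_regular_def by auto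

lemma phi_has_dirderiv: "\<tau> \<in> {0..T} \<Longrightarrow> has_dirderiv (axis i 1) (\<lambda>x. \<phi> x \<tau>) (\<lambda>x. pdx i \<phi> x \<tau>)"
  by (rule has_pdx_has_dirderiv[OF phi_regular(2)])

lemma phi_has_grad: "has_dirderiv (axis i 1) (\<lambda>x. \<phi> x t) (grad i)"
  unfolding grad_def[abs_def] by (rule phi_has_dirderiv[OF t_mem])

lemma grad_has_hess: "has_dirderiv (axis j 1) (grad i) (hess i j)"
  unfolding grad_def[abs_def] hess_def[abs_def]
  by (rule has_pdx_has_dirderiv[OF phi_regular(4) t_mem])

lemma continuous_phi: "continuous_on UNIV (\<lambda>x. \<phi> x t)"
  by (rule cont_Q_slice[OF phi_regular(1) t_mem])
lemma continuous_grad: "continuous_on UNIV (grad i)" unfolding grad_def[abs_def]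
  by (rule cont_Q_slice[OF phi_regular(3) t_mem])
lemma continuous_hess: "continuous_on UNIV (hess i j)" unfolding hess_def[abs_def]
  by (rule cont_Q_slice[OF phi_regular(5) t_mem])
lemma continuous_grad_t: "continuous_on UNIV (grad_t i)" unfolding grad_t_def[abs_def]
  by (rule cont_Q_slice[OF phi_regular(9) t_mem])
lemma continuous_phi_t: "continuous_on UNIV phi_t" unfolding phi_t_def[abs_def]
  by (rule cont_Q_slice[OF phi_regular(7) t_mem])
lemma continuous_dW: "continuous_on UNIV dW" unfolding dW_def[abs_def]
  by (rule continuous_on_compose2[OF continuous_deriv_W continuous_phi]) auto
lemma continuous_W_phi: "continuous_on UNIV (\<lambda>x. W (\<phi> x t))"
proof -
  have "continuous_on UNIV W" using W_has_deriv
    by (meson DERIV_isCont continuous_at_imp_continuous_on)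
  thus ?thesis by (rule continuous_on_compose2[OF _ continuous_phi]) auto
qed
lemma continuous_energy: "continuous_on UNIV energy"
  unfolding energy_def[abs_def] e_eps_def grad_def[symmetric]
  by (intro continuous_intros continuous_grad continuous_W_phi) (use eps in auto)

lemma hess_sym: "hess i j x = hess j i x"
  by (rule dirderiv_commute[OF phi_has_grad phi_has_grad grad_has_hess grad_has_hess
      continuous_hess continuous_hess])

lemma continuous_kern: "continuous_on UNIV kern" unfolding kern_def[abs_def]
  by (rule continuous_on_rho_heat)
lemma continuous_rho_heat_dx: "continuous_on UNIV (rho_heat_dx y s t i)"
  unfolding rho_heat_dx_def[abs_def]
  by (intro continuous_intros continuous_on_rho_heat) (use ts in auto)
lemma continuous_rho_heat_dxx: "continuous_on UNIV (rho_heat_dxx y s t i j)"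
  unfolding rho_heat_dxx_def[abs_def]
  by (intro continuous_intros continuous_on_rho_heat) (use ts in auto)
lemma continuous_eta_y: "continuous_on UNIV eta_y" unfolding eta_y_def[abs_def]
  by (rule continuous_on_compose2[OF continuous_eta]) (auto intro!: continuous_intros)
lemma continuous_eta_y_dx: "continuous_on UNIV (eta_y_dx i)" unfolding eta_y_dx_def[abs_def]
  by (rule continuous_on_compose2[OF eta_dx_regular(1)]) (auto intro!: continuous_intros)
lemma continuous_eta_y_dxx: "continuous_on UNIV (eta_y_dxx i j)" unfolding eta_y_dxx_def[abs_def]
  by (rule continuous_on_compose2[OF continuous_eta_dxx]) (auto intro!: continuous_intros)
lemma continuous_wgt: "continuous_on UNIV wgt" unfolding wgt_def[abs_def]
  by (intro continuous_intros continuous_kern continuous_eta_y)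
lemma continuous_wgt_dx: "continuous_on UNIV (wgt_dx j)" unfolding wgt_dx_def[abs_def]
  by (intro continuous_intros continuous_kern continuous_eta_y continuous_rho_heat_dx
      continuous_eta_y_dx)
lemma continuous_wgt_dxx: "continuous_on UNIV (wgt_dxx j i)" unfolding wgt_dxx_def[abs_def]
  by (intro continuous_intros continuous_kern continuous_eta_y continuous_rho_heat_dx
      continuous_eta_y_dx continuous_rho_heat_dxx continuous_eta_y_dxx)

lemma eta_y_has_dirderiv: "has_dirderiv (axis i 1) eta_y (eta_y_dx i)"
  unfolding eta_y_def[abs_def] eta_y_dx_def[abs_def]
  by (rule has_dirderiv_translate[OF eta_has_dirderiv])
lemma eta_y_dx_has_dirderiv: "has_dirderiv (axis j 1) (eta_y_dx i) (eta_y_dxx i j)"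
  unfolding eta_y_dx_def[abs_def] eta_y_dxx_def[abs_def]
  by (rule has_dirderiv_translate[OF eta_dx_has_dirderiv])
lemma kern_has_dirderiv: "has_dirderiv (axis i 1) kern (rho_heat_dx y s t i)"
  unfolding kern_def[abs_def] by (rule rho_heat_has_dirderiv) (use ts in auto)
lemma kern_dx_has_dirderiv: "has_dirderiv (axis j 1) (rho_heat_dx y s t i) (rho_heat_dxx y s t i j)"
  by (rule rho_heat_dx_has_dirderiv) (use ts in auto)

lemma wgt_has_dirderiv: "has_dirderiv (axis j 1) wgt (wgt_dx j)"
  unfolding wgt_def[abs_def] wgt_dx_def[abs_def]
  by (rule has_dirderiv_mult[OF kern_has_dirderiv eta_y_has_dirderiv])

lemma wgt_dx_has_dirderiv: "has_dirderiv (axis i 1) (wgt_dx j) (wgt_dxx j i)"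
proof -
  have "has_dirderiv (axis i 1) (wgt_dx j)
     (\<lambda>x. (rho_heat_dxx y s t j i x * eta_y x + rho_heat_dx y s t j x * eta_y_dx i x)
         + (rho_heat_dx y s t i x * eta_y_dx j x + kern x * eta_y_dxx j i x))"
    unfolding wgt_dx_def[abs_def]
    by (rule has_dirderiv_add[OF has_dirderiv_mult[OF kern_dx_has_dirderiv eta_y_has_dirderiv]
          has_dirderiv_mult[OF kern_has_dirderiv eta_y_dx_has_dirderiv]])
  thus ?thesis unfolding wgt_dxx_def[abs_def] by (simp add: add.assoc)
qed

lemma eta_y_outside: "norm (x - y) \<ge> 1/2 \<Longrightarrow> eta_y x = 0"
  unfolding eta_y_def using supp by force

lemma norm_ge_if_notin_cball: "x \<notin> cball y (1/2) \<Longrightarrow> norm (x - y) \<ge> 1/2"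
  by (simp add: dist_norm norm_minus_commute)

lemma wgt_outside: "x \<notin> cball y (1/2) \<Longrightarrow> wgt x = 0"
  unfolding wgt_def using eta_y_outside norm_ge_if_notin_cball by simp
lemma eta_y_dx_outside: "norm (x - y) \<ge> 1/2 \<Longrightarrow> eta_y_dx i x = 0"
  unfolding eta_y_dx_def using eta_derivs_vanish by simp
lemma eta_y_dxx_outside: "norm (x - y) \<ge> 1/2 \<Longrightarrow> eta_y_dxx i j x = 0"
  unfolding eta_y_dxx_def using eta_derivs_vanish by simp
lemma wgt_dx_outside: "x \<notin> cball y (1/2) \<Longrightarrow> wgt_dx j x = 0"
  unfolding wgt_dx_def using eta_y_outside eta_y_dx_outside norm_ge_if_notin_cball by simp
lemma wgt_dxx_outside: "x \<notin> cball y (1/2) \<Longrightarrow> wgt_dxx j i x = 0"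
  unfolding wgt_dxx_def
    using eta_y_outside eta_y_dx_outside eta_y_dxx_outside norm_ge_if_notin_cball by simp

definition "rad = min (min t (T - t)) (s - t)"

lemma rad_pos: "rad > 0"
  unfolding rad_def using t0 tT ts by simp

lemma mem_ball_rad: "\<tau> \<in> ball t rad \<Longrightarrow> 0 < \<tau> \<and> \<tau> < T \<and> \<tau> < s"
  unfolding rad_def by (auto simp: dist_real_def)

lemma ball_rad_subset: "ball t rad \<subseteq> {0..T}"
  using mem_ball_rad by fastforce

abbreviation "nbhd \<equiv> ball t rad \<times> (UNIV :: (real^'n) set)"

lemma integrable_supported:
  fixes f :: "real^'n \<Rightarrow> real"
  assumes "continuous_on UNIV f" "\<And>x. x \<notin> cball y (1/2) \<Longrightarrow> f x = 0"
  shows "integrable lborel f"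
  by (rule integrable_compact_support[OF assms])

lemma has_real_derivative_integral_mult:
  fixes g :: "real^'n \<Rightarrow> real" and F :: "real^'n \<Rightarrow> real \<Rightarrow> real"
  assumes cg: "continuous_on UNIV g" and sg: "\<And>x. x \<notin> cball y (1/2) \<Longrightarrow> g x = 0"
    and cF: "cont_Q T F" and hF: "has_pdt T F" and cFt: "cont_Q T (pdt T F)"
  shows "((\<lambda>\<tau>. \<integral>x. g x * F x \<tau> \<partial>lborel) has_real_derivative (\<integral>x. g x * pdt T F x t \<partial>lborel)) (at t)"
proof (rule has_real_derivative_parametric_integral[where \<delta>=rad and c=y and r="1/2"
    and g="\<lambda>\<tau> x. g x * F x \<tau>" and g'="\<lambda>\<tau> x. g x * pdt T F x \<tau>"])
  show "0 < rad" by (rule rad_pos)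
  show "\<And>\<tau> x. x \<notin> cball y (1/2) \<Longrightarrow> g x * F x \<tau> = 0" using sg by simp
  show "((\<lambda>\<tau>. g x * F x \<tau>) has_real_derivative g x
      * pdt T F x \<tau>) (at \<tau>)" if "\<tau> \<in> ball t rad" for \<tau> x
    using has_pdt_has_real_derivative[OF hF, of \<tau> x] mem_ball_rad[OF that]
    by (auto intro!: derivative_eq_intros)
  have c1: "continuous_on (ball t rad \<times> UNIV) (\<lambda>p. g (snd p))"
    by (rule continuous_on_compose2[OF cg]) (auto intro!: continuous_intros)
  have c2: "continuous_on (ball t rad \<times> UNIV) (\<lambda>p. pdt T F (snd p) (fst p))"
    by (rule cont_Q_swap[OF cFt ball_rad_subset])
  show "continuous_on (ball t rad \<times> UNIV) (\<lambda>(\<tau>, x). g x * pdt T F x \<tau>)"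
    using continuous_on_mult[OF c1 c2] by (simp add: split_beta)
  show "continuous_on UNIV (\<lambda>x. g x * F x \<tau>)" if "\<tau> \<in> ball t rad" for \<tau>
    using ball_rad_subset that by (intro continuous_on_mult cg cont_Q_slice[OF cF]) auto
qed

definition "energy_dx j x = \<epsilon> * (\<Sum>i\<in>UNIV. grad i x * hess i j x) + dW x * grad j x / \<epsilon>"

lemma energy_has_dirderiv: "has_dirderiv (axis j 1) energy (energy_dx j)"
proof -
  have h1: "has_dirderiv (axis j 1) (\<lambda>x. \<Sum>i\<in>UNIV. grad i x * grad i x) (\<lambda>x. \<Sum>i\<in>UNIV. hess i j x
      * grad i x + grad i x * hess i j x)"
    by (rule has_dirderiv_sum) (rule has_dirderiv_mult[OF grad_has_hess grad_has_hess])
  have h2: "has_dirderiv (axis j 1) (\<lambda>x. W (\<phi> x t)) (\<lambda>x. deriv W (\<phi> x t) * grad j x)"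
    by (rule has_dirderiv_comp[OF phi_has_grad]) (use W_has_deriv in auto)
  have "has_dirderiv (axis j 1) (\<lambda>x. (\<epsilon> / 2) * (\<Sum>i\<in>UNIV. grad i x * grad i x) + (1 / \<epsilon>) * W (\<phi> x t))
     (\<lambda>x. (\<epsilon> / 2) * (\<Sum>i\<in>UNIV. hess i j x * grad i x + grad i x * hess i j x)
         + (1 / \<epsilon>) * (deriv W (\<phi> x t) * grad j x))"
    by (rule has_dirderiv_add[OF has_dirderiv_cmult[OF h1] has_dirderiv_cmult[OF h2]])
  moreover have "(\<lambda>x. (\<epsilon> / 2) * (\<Sum>i\<in>UNIV. grad i x * grad i x) + (1 / \<epsilon>) * W (\<phi> x t)) = energy"
    unfolding energy_def[abs_def] e_eps_def grad_def by (simp add: power2_eq_square)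
  moreover have "(\<lambda>x. (\<epsilon> / 2) * (\<Sum>i\<in>UNIV. hess i j x * grad i x + grad i x * hess i j x)
      + (1 / \<epsilon>) * (deriv W (\<phi> x t) * grad j x)) = energy_dx j"
  proof
    fix x
    have "(\<Sum>i\<in>UNIV. hess i j x * grad i x + grad i x * hess i j x)
        = 2 * (\<Sum>i\<in>UNIV. grad i x * hess i j x)"
      by (simp add: sum_distrib_left algebra_simps flip: sum.distrib)
    thus "(\<epsilon> / 2) * (\<Sum>i\<in>UNIV. hess i j x * grad i x + grad i x * hess i j x)
        + (1 / \<epsilon>) * (deriv W (\<phi> x t) * grad j x) = energy_dx j x"
      unfolding energy_dx_def dW_def by simp
  qed
  ultimately show ?thesis by simp
qed

lemma continuous_energy_dx: "continuous_on UNIV (energy_dx j)"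
  unfolding energy_dx_def[abs_def]
  by (intro continuous_intros continuous_grad continuous_hess continuous_dW) (use eps in auto)

definition "null1 i x = wgt x * grad i x * grad_t i x
    + (wgt_dx i x * grad i x + wgt x * hess i i x) * phi_t x"
definition "null2 i j x = wgt_dxx j i x * (\<epsilon> * (grad i x * grad j x))
    + wgt_dx j x * (\<epsilon> * (hess i i x * grad j x + grad i x * hess j i x))"
definition "null3 j x = wgt_dxx j j x * energy x + wgt_dx j x * energy_dx j x"

text \<open>Only \<open>\<partial>\<^sub>t \<partial>\<^sub>i \<phi>\<close> is assumed to exist, not \<open>\<partial>\<^sub>i \<partial>\<^sub>t \<phi>\<close>: integrate by parts in \<open>x\<close> at every time
  near \<open>t\<close> and differentiate the resulting identity in time.\<close>

lemma integral_mult_grad_t: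
  assumes hg: "has_dirderiv (axis i 1) g g'"
    and cg: "continuous_on UNIV g" and cg': "continuous_on UNIV g'"
    and sg: "\<And>x. x \<notin> cball y (1/2) \<Longrightarrow> g x = 0"
  shows "(\<integral>x. g x * grad_t i x \<partial>lborel) = - (\<integral>x. g' x * phi_t x \<partial>lborel)"
proof -
  have sg': "g' x = 0" if "x \<notin> cball y (1/2)" for x
    by (rule has_dirderiv_zero_outside[OF hg sg that])
  have D1: "((\<lambda>\<tau>. \<integral>x. g x * pdx i \<phi> x \<tau> \<partial>lborel)
      has_real_derivative (\<integral>x. g x * grad_t i x \<partial>lborel)) (at t)"
    unfolding grad_t_def
    by (rule has_real_derivative_integral_mult[OF cg sg phi_regular(3,8,9)])
  have D2: "((\<lambda>\<tau>. \<integral>x. g' x * \<phi> x \<tau> \<partial>lborel)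
      has_real_derivative (\<integral>x. g' x * phi_t x \<partial>lborel)) (at t)"
    unfolding phi_t_def
    by (rule has_real_derivative_integral_mult[OF cg' sg' phi_regular(1,6,7)])
  have "(\<integral>x. g x * pdx i \<phi> x \<tau> \<partial>lborel) = - (\<integral>x. g' x * \<phi> x \<tau> \<partial>lborel)"
    if "\<tau> \<in> ball t rad" for \<tau>
  proof -
    have \<tau>: "\<tau> \<in> {0..T}" using ball_rad_subset that by auto
    show ?thesis
      using integration_by_parts[where c=y and r="1/2", OF hg phi_has_dirderiv[OF \<tau>] cg cg'
          cont_Q_slice[OF phi_regular(1) \<tau>] cont_Q_slice[OF phi_regular(3) \<tau>] sg] by simp
  qed
  hence "((\<lambda>\<tau>. \<integral>x. g x * pdx i \<phi> x \<tau> \<partial>lborel)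
      has_real_derivative - (\<integral>x. g' x * phi_t x \<partial>lborel)) (at t)"
    using rad_pos
    by (intro has_field_derivative_transform_within_open[OF DERIV_minus[OF D2], of "ball t rad"])
       auto
  thus ?thesis using DERIV_unique[OF D1] by blast
qed

lemma integral_null1: "(\<integral>x. null1 i x \<partial>lborel) = 0"
proof -
  define g where "g x = wgt x * grad i x" for x
  define g' where "g' x = wgt_dx i x * grad i x + wgt x * hess i i x" for x
  have hg: "has_dirderiv (axis i 1) g g'" unfolding g_def[abs_def] g'_def[abs_def]
    by (rule has_dirderiv_mult[OF wgt_has_dirderiv grad_has_hess])
  have cg: "continuous_on UNIV g" unfolding g_def[abs_def]
    by (intro continuous_intros continuous_wgt continuous_grad)
  have cg': "continuous_on UNIV g'" unfolding g'_def[abs_def]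
    by (intro continuous_intros continuous_wgt continuous_grad continuous_wgt_dx continuous_hess)
  have sg: "g x = 0" if "x \<notin> cball y (1/2)" for x unfolding g_def using wgt_outside[OF that] by simp
  have sg': "g' x = 0" if "x \<notin> cball y (1/2)" for x
    by (rule has_dirderiv_zero_outside[OF hg sg that])
  have "integrable lborel (\<lambda>x. g x * grad_t i x)"
    by (rule integrable_supported) (use sg in \<open>auto intro!: continuous_intros cg continuous_grad_t\<close>)
  moreover have "integrable lborel (\<lambda>x. g' x * phi_t x)"
    by (rule integrable_supported) (use sg' in \<open>auto intro!: continuous_intros cg' continuous_phi_t\<close>)
  ultimately have "(\<integral>x. g x * grad_t i x + g' x * phi_t x \<partial>lborel) = 0"
    using integral_mult_grad_t[OF hg cg cg' sg] by simp
  thus ?thesis unfolding g_def g'_def null1_def by simp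
qed

lemma integral_mult_dirderiv_eq_0:
  fixes F G :: "real^'n \<Rightarrow> real"
  assumes hF: "has_dirderiv v F F'" and hG: "has_dirderiv v G G'"
    and cF: "continuous_on UNIV F" and cF': "continuous_on UNIV F'"
    and cG: "continuous_on UNIV G" and cG': "continuous_on UNIV G'"
    and sF: "\<And>x. x \<notin> cball y (1/2) \<Longrightarrow> F x = 0"
  shows "(\<integral>x. F' x * G x + F x * G' x \<partial>lborel) = 0"
  by (rule integral_dirderiv_eq_0[OF has_dirderiv_mult[OF hF hG], of y "1/2"])
     (use sF continuous_on_mult[OF cF cG]
         continuous_on_add[OF continuous_on_mult[OF cF' cG] continuous_on_mult[OF cF cG']] in auto)

lemma integral_null2: "(\<integral>x. null2 i j x \<partial>lborel) = 0"
  unfolding null2_def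
proof (rule integral_mult_dirderiv_eq_0[OF wgt_dx_has_dirderiv])
  show "has_dirderiv (axis i 1) (\<lambda>x. \<epsilon> * (grad i x * grad j x)) (\<lambda>x. \<epsilon>
      * (hess i i x * grad j x + grad i x * hess j i x))"
    by (rule has_dirderiv_cmult[OF has_dirderiv_mult[OF grad_has_hess grad_has_hess]])
qed (auto intro!: continuous_intros continuous_wgt_dx continuous_wgt_dxx continuous_grad
    continuous_hess wgt_dx_outside)

lemma integral_null3: "(\<integral>x. null3 j x \<partial>lborel) = 0"
  unfolding null3_def
  by (rule integral_mult_dirderiv_eq_0[OF wgt_dx_has_dirderiv energy_has_dirderiv
        continuous_wgt_dx continuous_wgt_dxx continuous_energy continuous_energy_dx wgt_dx_outside])

lemma continuous_rho_heat_swap: "continuous_on nbhd (\<lambda>p. rho_heat y s (snd p) (fst p))"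
  unfolding rho_heat_def
  by (intro continuous_intros) (auto dest!: mem_ball_rad)

lemma continuous_swap: "cont_Q T g \<Longrightarrow> continuous_on nbhd (\<lambda>p. g (snd p) (fst p))"
  by (rule cont_Q_swap[OF _ ball_rad_subset])

lemma continuous_W_phi_swap: "continuous_on nbhd (\<lambda>p. W (\<phi> (snd p) (fst p)))"
proof -
  have "continuous_on UNIV W" using W_has_deriv
    by (meson DERIV_isCont continuous_at_imp_continuous_on)
  thus ?thesis by (rule continuous_on_compose2[OF _ continuous_swap[OF phi_regular(1)]]) auto
qed

lemma continuous_dW_phi_swap: "continuous_on nbhd (\<lambda>p. deriv W (\<phi> (snd p) (fst p)))"
  by (rule continuous_on_compose2[OF continuous_deriv_W continuous_swap[OF phi_regular(1)]]) auto

definition "dens \<tau> x = rho_tilde \<eta> y s x \<tau> * e_eps W \<epsilon> \<phi> x \<tau>"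
definition "dens_t \<tau> x = (rho_heat y s x \<tau> * ((real CARD('n) - 1) / (2 * (s - \<tau>))
    - (norm (x - y))\<^sup>2 / (4 * (s - \<tau>)\<^sup>2)) * \<eta> (x - y))
    * e_eps W \<epsilon> \<phi> x \<tau>
  + rho_tilde \<eta> y s x \<tau> * (\<epsilon> * (\<Sum>i\<in>UNIV. pdx i \<phi> x \<tau> * pdt T (pdx i \<phi>) x \<tau>)
      + deriv W (\<phi> x \<tau>) * pdt T \<phi> x \<tau> / \<epsilon>)"

lemma dens_has_time_derivative:
  assumes "\<tau> \<in> ball t rad"
  shows "((\<lambda>\<tau>. dens \<tau> x) has_real_derivative dens_t \<tau> x) (at \<tau>)"
proof -
  have \<tau>: "0 < \<tau>" "\<tau> < T" "\<tau> < s" using mem_ball_rad[OF assms] by auto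
  have hphi: "((\<lambda>\<tau>. \<phi> x \<tau>) has_real_derivative pdt T \<phi> x \<tau>) (at \<tau>)"
    by (rule has_pdt_has_real_derivative[OF phi_regular(6) \<tau>(1,2)])
  have hp: "((\<lambda>\<tau>. pdx i \<phi> x \<tau>) has_real_derivative pdt T (pdx i \<phi>) x \<tau>) (at \<tau>)" for i
    by (rule has_pdt_has_real_derivative[OF phi_regular(8) \<tau>(1,2)])
  have ds: "((\<lambda>\<tau>. \<Sum>i\<in>UNIV. (pdx i \<phi> x \<tau>)\<^sup>2) has_real_derivative
      (\<Sum>i\<in>UNIV. 2 * (pdx i \<phi> x \<tau> * pdt T (pdx i \<phi>) x \<tau>))) (at \<tau>)"
    by (rule DERIV_sum) (auto intro!: derivative_eq_intros hp)
  have dW: "((\<lambda>\<tau>. W (\<phi> x \<tau>)) has_real_derivative deriv W (\<phi> x \<tau>) * pdt T \<phi> x \<tau>) (at \<tau>)"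
    using DERIV_chain2[OF W_has_deriv[rule_format] hphi] .
  have de: "((\<lambda>\<tau>. e_eps W \<epsilon> \<phi> x \<tau>) has_real_derivative
      (\<epsilon> * (\<Sum>i\<in>UNIV. pdx i \<phi> x \<tau> * pdt T (pdx i \<phi>) x \<tau>)
          + deriv W (\<phi> x \<tau>) * pdt T \<phi> x \<tau> / \<epsilon>)) (at \<tau>)"
  proof -
    have "((\<lambda>\<tau>. \<epsilon> * (\<Sum>i\<in>UNIV. (pdx i \<phi> x \<tau>)\<^sup>2) / 2 + W (\<phi> x \<tau>) / \<epsilon>) has_real_derivative
      \<epsilon> * (\<Sum>i\<in>UNIV. 2 * (pdx i \<phi> x \<tau> * pdt T (pdx i \<phi>) x \<tau>)) / 2
          + deriv W (\<phi> x \<tau>) * pdt T \<phi> x \<tau> / \<epsilon>) (at \<tau>)"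
      by (rule DERIV_add[OF DERIV_cdivide[OF DERIV_cmult[OF ds]] DERIV_cdivide[OF dW]])
    thus ?thesis unfolding e_eps_def by (simp add: sum_distrib_left[symmetric])
  qed
  have dr: "((\<lambda>\<tau>. rho_tilde \<eta> y s x \<tau>) has_real_derivative
      rho_heat y s x \<tau> * ((real CARD('n) - 1) / (2 * (s - \<tau>))
          - (norm (x - y))\<^sup>2 / (4 * (s - \<tau>)\<^sup>2)) * \<eta> (x - y)) (at \<tau>)"
    unfolding rho_tilde_def by (rule DERIV_cmult_right[OF rho_heat_has_time_derivative[OF \<tau>(3)]])
  show ?thesis unfolding dens_def[abs_def] dens_t_def using DERIV_mult[OF dr de]
    by (simp add: mult.commute)
qed

lemma continuous_dens_t: "continuous_on nbhd (\<lambda>(\<tau>, x). dens_t \<tau> x)"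
proof -
  have c_eta2: "continuous_on nbhd (\<lambda>p. \<eta> (snd p - y))"
    by (rule continuous_on_compose2[OF continuous_eta]) (auto intro!: continuous_intros)
  have c_e2: "continuous_on nbhd (\<lambda>p. e_eps W \<epsilon> \<phi> (snd p) (fst p))"
    unfolding e_eps_def using eps
    by (intro continuous_intros continuous_swap[OF phi_regular(1)]
        continuous_swap[OF phi_regular(3)] continuous_W_phi_swap) auto
  have c_a: "continuous_on nbhd (\<lambda>p. (real CARD('n) - 1) / (2 * (s - fst p))
      - (norm (snd p - y))\<^sup>2 / (4 * (s - fst p)\<^sup>2))"
    by (intro continuous_intros) (auto dest!: mem_ball_rad)
  have "continuous_on nbhd (\<lambda>p. (rho_heat y s (snd p) (fst p)
      * ((real CARD('n) - 1) / (2 * (s - fst p)) - (norm (snd p - y))\<^sup>2 / (4 * (s - fst p)\<^sup>2))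
      * \<eta> (snd p - y))
    * e_eps W \<epsilon> \<phi> (snd p) (fst p)
  + (rho_heat y s (snd p) (fst p) * \<eta> (snd p - y))
      * (\<epsilon> * (\<Sum>i\<in>UNIV. pdx i \<phi> (snd p) (fst p) * pdt T (pdx i \<phi>) (snd p) (fst p))
      + deriv W (\<phi> (snd p) (fst p)) * pdt T \<phi> (snd p) (fst p) / \<epsilon>))"
    using eps
    by (intro continuous_intros continuous_rho_heat_swap c_a c_eta2 c_e2
          continuous_swap[OF phi_regular(3)] continuous_swap[OF phi_regular(7)]
          continuous_swap[OF phi_regular(9)] continuous_dW_phi_swap) auto
  thus ?thesis unfolding dens_t_def rho_tilde_def split_beta .
qed

lemma localized_energy_has_derivative:
  "((\<lambda>\<tau>. \<integral>x. rho_tilde \<eta> y s x \<tau> * e_eps W \<epsilon> \<phi> x \<tau> \<partial>lborel) has_real_derivative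
      (\<integral>x. dens_t t x \<partial>lborel)) (at t)"
proof -
  have "((\<lambda>\<tau>. \<integral>x. dens \<tau> x \<partial>lborel) has_real_derivative (\<integral>x. dens_t t x \<partial>lborel)) (at t)"
  proof (rule has_real_derivative_parametric_integral[where \<delta>=rad and c=y and r="1/2"])
    show "0 < rad" by (rule rad_pos)
    show "\<And>\<tau> x. x \<notin> cball y (1/2) \<Longrightarrow> dens \<tau> x = 0"
      unfolding dens_def rho_tilde_def using eta_y_outside norm_ge_if_notin_cball
        unfolding eta_y_def by simp
    show "\<And>\<tau> x. \<tau> \<in> ball t rad \<Longrightarrow> ((\<lambda>\<tau>. dens \<tau> x) has_real_derivative dens_t \<tau> x) (at \<tau>)"
      by (rule dens_has_time_derivative)
    show "continuous_on nbhd (\<lambda>(\<tau>, x). dens_t \<tau> x)" by (rule continuous_dens_t)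
    show "continuous_on UNIV (dens \<tau>)" if "\<tau> \<in> ball t rad" for \<tau>
    proof -
      have \<tau>: "\<tau> \<in> {0..T}" using ball_rad_subset that by auto
      have "continuous_on UNIV (\<lambda>x. W (\<phi> x \<tau>))"
      proof -
        have "continuous_on UNIV W" using W_has_deriv
          by (meson DERIV_isCont continuous_at_imp_continuous_on)
        thus ?thesis by (rule continuous_on_compose2[OF _ cont_Q_slice[OF phi_regular(1) \<tau>]]) auto
      qed
      thus ?thesis unfolding dens_def[abs_def] rho_tilde_def e_eps_def using eps
        by (intro continuous_intros continuous_on_rho_heat cont_Q_slice[OF phi_regular(3) \<tau>]
            continuous_on_compose2[OF continuous_eta, of UNIV "\<lambda>x. x - y"]) auto
    qed
  qed
  thus ?thesis unfolding dens_def .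
qed

definition "wgt_t x = kern x * ((real CARD('n) - 1) / (2 * \<tau>0) - (norm (x - y))\<^sup>2 / (4 * \<tau>0\<^sup>2))
    * eta_y x"
definition "ac_rhs x = (\<Sum>i\<in>UNIV. hess i i x) - dW x / \<epsilon>\<^sup>2"
definition "wgt_flux x = (\<Sum>j\<in>UNIV. wgt_dx j x * grad j x)"
definition "wgt_hess_grad x = (\<Sum>i\<in>UNIV. \<Sum>j\<in>UNIV. wgt_dxx j i x * grad i x * grad j x)"
definition "wgt_lap x = (\<Sum>j\<in>UNIV. wgt_dxx j j x)"
definition "dens_ibp x = wgt_t x * energy x - \<epsilon> * phi_t x * (wgt_flux x + wgt x * ac_rhs x)
    - \<epsilon> * ac_rhs x * wgt_flux x - \<epsilon> * wgt_hess_grad x + wgt_lap x * energy x"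

definition "null_sum x = \<epsilon> * (\<Sum>i\<in>UNIV. null1 i x) + (\<Sum>j\<in>UNIV. \<Sum>i\<in>UNIV. null2 i j x)
    - (\<Sum>j\<in>UNIV. null3 j x)"

lemma dens_t_at: "dens_t t x = wgt_t x * energy x + wgt x
    * (\<epsilon> * (\<Sum>i\<in>UNIV. grad i x * grad_t i x) + dW x * phi_t x / \<epsilon>)"
  unfolding dens_t_def wgt_t_def wgt_def kern_def eta_y_def energy_def grad_def grad_t_def dW_def
      phi_t_def rho_tilde_def \<tau>0_def
  by simp

lemma sum_null2_eq:
  "(\<Sum>j\<in>UNIV. \<Sum>i\<in>UNIV. null2 i j x) = \<epsilon> * wgt_hess_grad x
    + \<epsilon> * (\<Sum>j\<in>UNIV. wgt_dx j x * ((\<Sum>i\<in>UNIV. hess i i x) * grad j x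
        + (\<Sum>i\<in>UNIV. grad i x * hess j i x)))"
proof -
  have "(\<Sum>j\<in>UNIV. \<Sum>i\<in>UNIV. null2 i j x) = (\<Sum>j\<in>UNIV. \<Sum>i\<in>UNIV. \<epsilon>
      * (wgt_dxx j i x * grad i x * grad j x))
     + (\<Sum>j\<in>UNIV. \<Sum>i\<in>UNIV. \<epsilon> * (wgt_dx j x * (hess i i x * grad j x + grad i x * hess j i x)))"
    unfolding null2_def by (simp add: sum.distrib algebra_simps)
  also have "(\<Sum>j\<in>UNIV. \<Sum>i\<in>UNIV. \<epsilon> * (wgt_dxx j i x * grad i x * grad j x)) = \<epsilon> * wgt_hess_grad x"
    unfolding wgt_hess_grad_def sum_distrib_left by (rule sum.swap)
  also have "(\<Sum>j\<in>UNIV. \<Sum>i\<in>UNIV. \<epsilon> * (wgt_dx j x * (hess i i x * grad j x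
      + grad i x * hess j i x)))
      = \<epsilon> * (\<Sum>j\<in>UNIV. wgt_dx j x * ((\<Sum>i\<in>UNIV. hess i i x) * grad j x
          + (\<Sum>i\<in>UNIV. grad i x * hess j i x)))"
    by (simp add: sum_distrib_left sum_distrib_right sum.distrib algebra_simps)
  finally show ?thesis .
qed

lemma eps_ac_rhs_wgt_flux_eq:
  "\<epsilon> * ac_rhs x * wgt_flux x = (\<Sum>j\<in>UNIV. wgt_dx j x
    * (\<epsilon> * (\<Sum>i\<in>UNIV. hess i i x) * grad j x - dW x * grad j x / \<epsilon>))"
proof -
  have "\<epsilon> * ac_rhs x * wgt_flux x = (\<Sum>j\<in>UNIV. \<epsilon> * ac_rhs x * (wgt_dx j x * grad j x))"
    unfolding wgt_flux_def by (simp add: sum_distrib_left)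
  also have "\<dots> = (\<Sum>j\<in>UNIV. wgt_dx j x * (\<epsilon> * (\<Sum>i\<in>UNIV. hess i i x) * grad j x
      - dW x * grad j x / \<epsilon>))"
  proof (rule sum.cong)
    fix j
    show "\<epsilon> * ac_rhs x * (wgt_dx j x * grad j x)
        = wgt_dx j x * (\<epsilon> * (\<Sum>i\<in>UNIV. hess i i x) * grad j x - dW x * grad j x / \<epsilon>)"
      unfolding ac_rhs_def using eps by (simp add: field_simps power2_eq_square)
  qed simp
  finally show ?thesis .
qed

text \<open>\<open>dens_t t\<close> is the time derivative of the localized energy density; \<open>dens_ibp\<close> is what
  remains of it after the three integrations by parts recorded in \<open>null_sum\<close>.\<close>

lemma dens_t_eq: "dens_t t x - dens_ibp x = null_sum x"
proof -
  have a: "(\<Sum>i\<in>UNIV. null1 i x) = (\<Sum>i\<in>UNIV. wgt x * grad i x * grad_t i x)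
      + phi_t x * (wgt_flux x + wgt x * (\<Sum>i\<in>UNIV. hess i i x))"
    unfolding null1_def wgt_flux_def
    by (simp add: sum.distrib sum_distrib_left sum_distrib_right algebra_simps)
  have c: "(\<Sum>j\<in>UNIV. null3 j x) = wgt_lap x * energy x
      + (\<Sum>j\<in>UNIV. wgt_dx j x * (\<epsilon> * (\<Sum>i\<in>UNIV. grad i x * hess j i x) + dW x * grad j x / \<epsilon>))"
    unfolding null3_def wgt_lap_def energy_dx_def using hess_sym
    by (simp add: sum.distrib sum_distrib_right)
  have e: "\<epsilon> * (\<Sum>j\<in>UNIV. wgt_dx j x * ((\<Sum>i\<in>UNIV. hess i i x) * grad j x
      + (\<Sum>i\<in>UNIV. grad i x * hess j i x)))
      - (\<Sum>j\<in>UNIV. wgt_dx j x * (\<epsilon> * (\<Sum>i\<in>UNIV. grad i x * hess j i x) + dW x * grad j x / \<epsilon>))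
      = (\<Sum>j\<in>UNIV. wgt_dx j x * (\<epsilon> * (\<Sum>i\<in>UNIV. hess i i x) * grad j x - dW x * grad j x / \<epsilon>))"
    by (simp add: sum_distrib_left sum_subtractf[symmetric] algebra_simps)
  have f: "- \<epsilon> * phi_t x * (wgt x * ac_rhs x) = - \<epsilon> * phi_t x * wgt x * (\<Sum>i\<in>UNIV. hess i i x)
      + wgt x * (dW x * phi_t x / \<epsilon>)"
    unfolding ac_rhs_def using eps by (simp add: algebra_simps power2_eq_square)
  have g: "\<epsilon> * (\<Sum>i\<in>UNIV. wgt x * grad i x * grad_t i x)
      = wgt x * (\<epsilon> * (\<Sum>i\<in>UNIV. grad i x * grad_t i x))"
    by (simp add: sum_distrib_left algebra_simps)
  show ?thesis
    unfolding dens_t_at null_sum_def a sum_null2_eq c dens_ibp_def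
    by (rule dens_t_ibp_algebra[OF eps_ac_rhs_wgt_flux_eq e f g])
qed

lemma continuous_wgt_t: "continuous_on UNIV wgt_t"
  unfolding wgt_t_def[abs_def] using tau0_pos
  by (intro continuous_intros continuous_kern continuous_eta_y) auto
lemma wgt_t_outside: "x \<notin> cball y (1/2) \<Longrightarrow> wgt_t x = 0"
  unfolding wgt_t_def using eta_y_outside norm_ge_if_notin_cball by simp

lemma integrable_dens_t: "integrable lborel (dens_t t)"
proof -
  have "integrable lborel (\<lambda>x. wgt_t x * energy x + wgt x
      * (\<epsilon> * (\<Sum>i\<in>UNIV. grad i x * grad_t i x) + dW x * phi_t x / \<epsilon>))"
    by (rule integrable_supported) (use wgt_t_outside wgt_outside eps in \<open>auto intro!:
        continuous_intros continuous_wgt_t continuous_energy continuous_wgt continuous_grad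
        continuous_grad_t continuous_dW continuous_phi_t\<close>)
  thus ?thesis using dens_t_at by presburger
qed

lemma integrable_null1: "integrable lborel (null1 i)"
  unfolding null1_def[abs_def]
  by (rule integrable_supported) (use wgt_outside wgt_dx_outside in \<open>auto intro!:
      continuous_intros continuous_wgt continuous_wgt_dx continuous_grad continuous_hess
      continuous_grad_t continuous_phi_t\<close>)
lemma integrable_null2: "integrable lborel (null2 i j)"
  unfolding null2_def[abs_def]
  by (rule integrable_supported) (use wgt_dxx_outside wgt_dx_outside in \<open>auto intro!:
      continuous_intros continuous_wgt_dxx continuous_wgt_dx continuous_grad continuous_hess\<close>)
lemma integrable_null3: "integrable lborel (null3 j)"
  unfolding null3_def[abs_def]
  by (rule integrable_supported) (use wgt_dxx_outside wgt_dx_outside in \<open>auto intro!: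
      continuous_intros continuous_wgt_dxx continuous_wgt_dx continuous_energy
      continuous_energy_dx\<close>)

lemma null_sum_integral: "integrable lborel null_sum" "(\<integral>x. null_sum x \<partial>lborel) = 0"
proof -
  have i1: "integrable lborel (\<lambda>x. \<epsilon> * (\<Sum>i\<in>UNIV. null1 i x))"
    by (rule Bochner_Integration.integrable_mult_right, rule Bochner_Integration.integrable_sum,
        rule integrable_null1)
  have i2: "integrable lborel (\<lambda>x. \<Sum>j\<in>UNIV. \<Sum>i\<in>UNIV. null2 i j x)"
    by (intro Bochner_Integration.integrable_sum integrable_null2)
  have i3: "integrable lborel (\<lambda>x. \<Sum>j\<in>UNIV. null3 j x)"
    by (intro Bochner_Integration.integrable_sum integrable_null3)
  show "integrable lborel null_sum" unfolding null_sum_def[abs_def]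
    by (intro Bochner_Integration.integrable_diff Bochner_Integration.integrable_add i1 i2 i3)
  have "(\<integral>x. null_sum x \<partial>lborel) = (\<integral>x. \<epsilon> * (\<Sum>i\<in>UNIV. null1 i x) \<partial>lborel)
      + (\<integral>x. (\<Sum>j\<in>UNIV. \<Sum>i\<in>UNIV. null2 i j x) \<partial>lborel)
      - (\<integral>x. (\<Sum>j\<in>UNIV. null3 j x) \<partial>lborel)"
    unfolding null_sum_def using i1 i2 i3 by simp
  also have "(\<integral>x. \<epsilon> * (\<Sum>i\<in>UNIV. null1 i x) \<partial>lborel) = 0"
  proof -
    have "integrable lborel (\<lambda>x. \<Sum>i\<in>UNIV. null1 i x)"
      by (intro Bochner_Integration.integrable_sum integrable_null1)
    thus ?thesis using integrable_null1 integral_null1 by (simp add: integral_sum)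
  qed
  also have "(\<integral>x. (\<Sum>j\<in>UNIV. \<Sum>i\<in>UNIV. null2 i j x) \<partial>lborel) = 0"
    using integrable_null2 integral_null2 by (simp add: integral_sum integrable_sum)
  also have "(\<integral>x. (\<Sum>j\<in>UNIV. null3 j x) \<partial>lborel) = 0"
    using integrable_null3 integral_null3 by (simp add: integral_sum)
  finally show "(\<integral>x. null_sum x \<partial>lborel) = 0" by simp
qed

lemma dens_ibp_integral: "integrable lborel dens_ibp" "(\<integral>x. dens_t t x \<partial>lborel)
    = (\<integral>x. dens_ibp x \<partial>lborel)"
proof -
  have eq: "dens_ibp = (\<lambda>x. dens_t t x - null_sum x)" using dens_t_eq
    by (intro ext) (metis add_diff_cancel_left' diff_add_cancel)
  show "integrable lborel dens_ibp" unfolding eq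
    by (intro Bochner_Integration.integrable_diff integrable_dens_t null_sum_integral(1))
  show "(\<integral>x. dens_t t x \<partial>lborel) = (\<integral>x. dens_ibp x \<partial>lborel)" unfolding eq
    using integrable_dens_t null_sum_integral by simp
qed

definition "grad_sq x = (\<Sum>i\<in>UNIV. (grad i x)\<^sup>2)"
definition "radial_grad x = (\<Sum>j\<in>UNIV. (x - y) $ j * grad j x)"
definition "kern_flux x = (\<Sum>j\<in>UNIV. rho_heat_dx y s t j x * grad j x)"
definition "eta_y_flux x = (\<Sum>j\<in>UNIV. eta_y_dx j x * grad j x)"
definition "kern_hess_grad x = (\<Sum>i\<in>UNIV. \<Sum>j\<in>UNIV. rho_heat_dxx y s t j i x * grad i x * grad j x)"
definition "eta_y_hess_grad x = (\<Sum>i\<in>UNIV. \<Sum>j\<in>UNIV. eta_y_dxx j i x * grad i x * grad j x)"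
definition "kern_eta_y_cross x = (\<Sum>j\<in>UNIV. rho_heat_dx y s t j x * eta_y_dx j x)"
definition "eta_y_lap x = (\<Sum>j\<in>UNIV. eta_y_dxx j j x)"
definition "transport x = (\<Sum>i\<in>UNIV. u x t $ i * grad i x)"

lemma rho_heat_dx_eq: "rho_heat_dx y s t j x = - kern x * (x - y) $ j / (2 * \<tau>0)"
  unfolding rho_heat_dx_def kern_def \<tau>0_def by simp

lemma rho_heat_dxx_eq: "rho_heat_dxx y s t j i x = kern x
    * ((x - y) $ j * (x - y) $ i / (4 * \<tau>0\<^sup>2) - (if j = i then 1 else 0) / (2 * \<tau>0))"
  unfolding rho_heat_dxx_def kern_def \<tau>0_def by simp

lemma kern_flux_eq: "kern_flux x = - kern x * radial_grad x / (2 * \<tau>0)"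
  unfolding kern_flux_def radial_grad_def rho_heat_dx_eq
  by (simp add: sum_distrib_left sum_divide_distrib algebra_simps)

lemma kern_hess_grad_eq: "kern_hess_grad x = kern x
    * ((radial_grad x)\<^sup>2 / (4 * \<tau>0\<^sup>2) - grad_sq x / (2 * \<tau>0))"
proof -
  have "kern_hess_grad x = (\<Sum>i\<in>UNIV. \<Sum>j\<in>UNIV. kern x / (4 * \<tau>0\<^sup>2)
      * (((x - y) $ i * grad i x) * ((x - y) $ j * grad j x))
      - kern x / (2 * \<tau>0) * ((if j = i then 1 else 0) * (grad i x * grad j x)))"
    unfolding kern_hess_grad_def rho_heat_dxx_eq
    by (intro sum.cong refl) (use tau0_pos in \<open>simp add: field_simps\<close>)
  also have "\<dots> = kern x / (4 * \<tau>0\<^sup>2) * (\<Sum>i\<in>UNIV. \<Sum>j\<in>UNIV. ((x - y) $ i * grad i x)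
      * ((x - y) $ j * grad j x))
      - kern x / (2 * \<tau>0) * (\<Sum>i\<in>UNIV. \<Sum>j\<in>UNIV. (if j = i then 1 else 0) * (grad i x * grad j x))"
    by (simp add: sum_subtractf sum_distrib_left)
  also have "\<dots> = kern x / (4 * \<tau>0\<^sup>2) * (radial_grad x)\<^sup>2 - kern x / (2 * \<tau>0) * grad_sq x"
    unfolding sum_product_square[of "\<lambda>i. (x - y) $ i
        * grad i x"] sum_product_delta[of "\<lambda>i. grad i x"] radial_grad_def grad_sq_def ..
  finally show ?thesis by (simp add: algebra_simps)
qed

lemma kern_lap_eq: "(\<Sum>j\<in>UNIV. rho_heat_dxx y s t j j x)
    = kern x * ((norm (x - y))\<^sup>2 / (4 * \<tau>0\<^sup>2) - real CARD('n) / (2 * \<tau>0))"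
proof -
  have "(\<Sum>j\<in>UNIV. rho_heat_dxx y s t j j x) = (\<Sum>j\<in>UNIV. kern x / (4 * \<tau>0\<^sup>2) * ((x - y) $ j)\<^sup>2
      - kern x / (2 * \<tau>0))"
    unfolding rho_heat_dxx_eq by (intro sum.cong refl)
        (use tau0_pos in \<open>simp add: field_simps power2_eq_square\<close>)
  also have "\<dots> = kern x / (4 * \<tau>0\<^sup>2) * (\<Sum>j\<in>UNIV. ((x - y) $ j)\<^sup>2)
      - real CARD('n) * (kern x / (2 * \<tau>0))"
    by (simp only: sum_subtractf sum_distrib_left[symmetric] sum_constant)
  also have "\<dots> = kern x / (4 * \<tau>0\<^sup>2) * (norm (x - y))\<^sup>2 - real CARD('n) * (kern x / (2 * \<tau>0))"
    unfolding power2_norm_vec[of "x - y"] ..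
  finally show ?thesis by (simp add: algebra_simps)
qed

lemma wgt_flux_eq: "wgt_flux x = eta_y x * kern_flux x + kern x * eta_y_flux x"
  unfolding wgt_flux_def kern_flux_def eta_y_flux_def wgt_dx_def
  by (simp add: sum.distrib sum_distrib_left algebra_simps)

lemma wgt_hess_grad_eq: "wgt_hess_grad x = eta_y x * kern_hess_grad x
    + 2 * (kern_flux x * eta_y_flux x) + kern x * eta_y_hess_grad x"
proof -
  have "wgt_hess_grad x = (\<Sum>i\<in>UNIV. \<Sum>j\<in>UNIV. eta_y x
      * (rho_heat_dxx y s t j i x * grad i x * grad j x)
     + (rho_heat_dx y s t j x * grad j x) * (eta_y_dx i x * grad i x)
         + (rho_heat_dx y s t i x * grad i x) * (eta_y_dx j x * grad j x)
     + kern x * (eta_y_dxx j i x * grad i x * grad j x))"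
    unfolding wgt_hess_grad_def wgt_dxx_def by (intro sum.cong refl) (simp add: algebra_simps)
  also have "\<dots> = eta_y x * kern_hess_grad x + (\<Sum>i\<in>UNIV. \<Sum>j\<in>UNIV. (rho_heat_dx y s t j x
      * grad j x) * (eta_y_dx i x * grad i x))
      + (\<Sum>i\<in>UNIV. \<Sum>j\<in>UNIV. (rho_heat_dx y s t i x * grad i x) * (eta_y_dx j x * grad j x))
          + kern x * eta_y_hess_grad x"
    unfolding kern_hess_grad_def eta_y_hess_grad_def by (simp add: sum.distrib sum_distrib_left)
  also have "(\<Sum>i\<in>UNIV. \<Sum>j\<in>UNIV. (rho_heat_dx y s t j x * grad j x) * (eta_y_dx i x * grad i x))
      = kern_flux x * eta_y_flux x"
    unfolding kern_flux_def eta_y_flux_def sum_product by (subst sum.swap) simp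
  also have "(\<Sum>i\<in>UNIV. \<Sum>j\<in>UNIV. (rho_heat_dx y s t i x * grad i x) * (eta_y_dx j x * grad j x))
      = kern_flux x * eta_y_flux x"
    unfolding kern_flux_def eta_y_flux_def sum_product ..
  finally show ?thesis by simp
qed

lemma wgt_lap_eq: "wgt_lap x = eta_y x * (\<Sum>j\<in>UNIV. rho_heat_dxx y s t j j x)
    + 2 * kern_eta_y_cross x + kern x * eta_y_lap x"
  unfolding wgt_lap_def wgt_dxx_def kern_eta_y_cross_def eta_y_lap_def
  by (simp add: sum.distrib sum_distrib_left algebra_simps)

lemma phi_t_eq: "phi_t x = ac_rhs x - transport x"
proof -
  have "pdt T \<phi> x t + (\<Sum>i\<in>UNIV. u x t $ i * pdx i \<phi> x t)
              = (\<Sum>i\<in>UNIV. pdx i (pdx i \<phi>) x t) - deriv W (\<phi> x t) / \<epsilon>\<^sup>2"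
    using pde t_mem by blast
  thus ?thesis unfolding phi_t_def ac_rhs_def transport_def grad_def hess_def dW_def by linarith
qed

definition "main_terms x =
  eta_y x * kern x * (- 1 / (2 * \<tau>0)) * energy x
  - \<epsilon> * (ac_rhs x - transport x) * (eta_y x * kern_flux x + kern x * eta_y_flux x
      + kern x * eta_y x * ac_rhs x)
  - \<epsilon> * ac_rhs x * (eta_y x * kern_flux x + kern x * eta_y_flux x)
  - \<epsilon> * (eta_y x * kern_hess_grad x + 2 * (kern_flux x * eta_y_flux x))"
definition "cutoff_terms x =
  - \<epsilon> * (kern x * eta_y_hess_grad x) + (2 * kern_eta_y_cross x + kern x * eta_y_lap x) * energy x"
definition "cutoff_flux_term x =
  (if eta_y x > 0 then \<epsilon> * kern x * (eta_y_flux x)\<^sup>2 / eta_y x else 0)"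

lemma dens_ibp_split: "dens_ibp x = main_terms x + cutoff_terms x"
  unfolding dens_ibp_def main_terms_def cutoff_terms_def
  by (rule dens_ibp_split_algebra[OF wgt_flux_eq wgt_def wgt_hess_grad_eq wgt_lap_eq phi_t_eq
      wgt_t_def kern_lap_eq])

lemma energy_eq: "energy x = \<epsilon> * grad_sq x / 2 + W (\<phi> x t) / \<epsilon>"
  unfolding energy_def e_eps_def grad_sq_def grad_def ..
lemma xi_eq: "xi_eps W \<epsilon> \<phi> x t = \<epsilon> * grad_sq x / 2 - W (\<phi> x t) / \<epsilon>"
  unfolding xi_eps_def grad_sq_def grad_def ..
lemma grad_sq_nonneg: "grad_sq x \<ge> 0" unfolding grad_sq_def by (simp add: sum_nonneg)
lemma W_phi_div_nonneg: "W (\<phi> x t) / \<epsilon> \<ge> 0" using W_nonneg eps by simp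
lemma energy_nonneg: "energy x \<ge> 0" unfolding energy_eq using grad_sq_nonneg W_phi_div_nonneg eps
  by simp
lemma eps_grad_sq_le: "\<epsilon> * grad_sq x \<le> 2 * energy x"
proof -
  have "2 * energy x = \<epsilon> * grad_sq x + 2 * (W (\<phi> x t) / \<epsilon>)" unfolding energy_eq
    by (simp add: algebra_simps)
  thus ?thesis using W_phi_div_nonneg[of x] by linarith
qed
lemma kern_pos: "kern x > 0" unfolding kern_def by (rule rho_heat_pos[OF ts])
lemma eta_y_nonneg: "eta_y x \<ge> 0" unfolding eta_y_def by (rule eta_nonneg)

lemma transport_sq_le: "(transport x)\<^sup>2 \<le> (norm (u x t))\<^sup>2 * grad_sq x"
  unfolding transport_def grad_sq_def power2_norm_vec by (rule Cauchy_Schwarz_ineq_sum)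

lemma eta_y_dx_sq_le: "(eta_y_dx j x)\<^sup>2 \<le> 2 * (M2 + 1) * eta_y x"
  unfolding eta_y_dx_def eta_y_def by (rule eta_dx_sq_le[OF M2])

lemma eta_y_flux_eq_0: "eta_y x = 0 \<Longrightarrow> eta_y_flux x = 0"
proof -
  assume h: "eta_y x = 0"
  have "eta_y_dx j x = 0" for j using eta_y_dx_sq_le[of j x] h by simp
  thus ?thesis unfolding eta_y_flux_def by simp
qed

lemma dens_ibp_le:
  "dens_ibp x \<le> kern x * eta_y x * (norm (u x t))\<^sup>2 * energy x / 2
     + xi_eps W \<epsilon> \<phi> x t * (kern x * eta_y x) / (2 * \<tau>0) + (cutoff_flux_term x + cutoff_terms x)"
proof -
  have "main_terms x \<le> kern x * eta_y x * (norm (u x t))\<^sup>2 * energy x / 2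
     + xi_eps W \<epsilon> \<phi> x t * (kern x * eta_y x) / (2 * \<tau>0) + cutoff_flux_term x"
    unfolding main_terms_def cutoff_flux_term_def
    by (rule completed_square_bound[OF eps kern_pos eta_y_nonneg tau0_pos energy_eq xi_eq
          W_phi_div_nonneg _ transport_sq_le kern_flux_eq kern_hess_grad_eq eta_y_flux_eq_0]) simp
  thus ?thesis unfolding dens_ibp_split by linarith
qed

definition "n_dim = real CARD('n)"
definition "glaeser_const = 2 * n_dim * (M2 + 1)"
definition "error_const = 2 * glaeser_const + n_dim * M1 + 3 * n_dim * M2"
definition mono_const :: real where "mono_const = monotonicity_const CARD('n) M1 M2"

lemma mono_const_eq: "mono_const = error_const * kernel_const CARD('n)"
  unfolding mono_const_def monotonicity_const_def error_const_def glaeser_const_def n_dim_def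
  by simp

lemma M1_nonneg: "M1 \<ge> 0" using M1 by (meson abs_ge_zero order_trans)
lemma M2_nonneg: "M2 \<ge> 0" using M2 by (meson abs_ge_zero order_trans)
lemma n_dim_ge_1: "n_dim \<ge> 1" unfolding n_dim_def by (simp add: Suc_leI)
lemma glaeser_const_nonneg: "glaeser_const \<ge> 0" unfolding glaeser_const_def
  using n_dim_ge_1 M2_nonneg by simp
lemma error_const_nonneg: "error_const \<ge> 0" unfolding error_const_def
  using glaeser_const_nonneg n_dim_ge_1 M1_nonneg M2_nonneg by simp
lemma mono_const_nonneg: "mono_const \<ge> 0" unfolding mono_const_eq
  using error_const_nonneg kernel_const_ge_2[of "CARD('n)"] by simp

lemma eta_y_flux_term_le: "cutoff_flux_term x \<le> 2 * glaeser_const * kern x * energy x"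
proof (cases "eta_y x > 0")
  case True
  have "(eta_y_flux x)\<^sup>2 \<le> (\<Sum>j\<in>UNIV. (eta_y_dx j x)\<^sup>2) * grad_sq x"
    unfolding eta_y_flux_def grad_sq_def by (rule Cauchy_Schwarz_ineq_sum)
  also have "(\<Sum>j\<in>UNIV. (eta_y_dx j x)\<^sup>2) \<le> (\<Sum>j\<in>(UNIV::'n set). 2 * (M2 + 1) * eta_y x)"
    by (rule sum_mono) (rule eta_y_dx_sq_le)
  also have "\<dots> = glaeser_const * eta_y x" unfolding glaeser_const_def n_dim_def by simp
  finally have "(eta_y_flux x)\<^sup>2 \<le> glaeser_const * eta_y x * grad_sq x" using grad_sq_nonneg
    by (simp add: mult_right_mono)
  hence "(eta_y_flux x)\<^sup>2 / eta_y x \<le> glaeser_const * grad_sq x" using True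
    by (simp add: field_simps)
  moreover have "0 \<le> \<epsilon> * kern x" using eps kern_pos[of x] by simp
  ultimately have "\<epsilon> * kern x * ((eta_y_flux x)\<^sup>2 / eta_y x)
      \<le> \<epsilon> * kern x * (glaeser_const * grad_sq x)"
    by (rule mult_left_mono)
  also have "\<dots> = kern x * glaeser_const * (\<epsilon> * grad_sq x)" by (simp add: algebra_simps)
  also have "\<dots> \<le> kern x * glaeser_const * (2 * energy x)"
    using eps_grad_sq_le[of x] kern_pos[of x] glaeser_const_nonneg by (intro mult_left_mono) auto
  finally show ?thesis using True unfolding cutoff_flux_term_def by (simp add: algebra_simps)
next
  case False
  thus ?thesis using glaeser_const_nonneg kern_pos[of x] energy_nonneg[of x]
    unfolding cutoff_flux_term_def by simp
qed

lemma sum_abs_grad_sq_le: "(\<Sum>i\<in>UNIV. \<bar>grad i x\<bar>)\<^sup>2 \<le> n_dim * grad_sq x"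
proof -
  have "(\<Sum>i\<in>UNIV. 1 * \<bar>grad i x\<bar>)\<^sup>2 \<le> (\<Sum>i\<in>(UNIV::'n set). 1\<^sup>2) * (\<Sum>i\<in>UNIV. \<bar>grad i x\<bar>\<^sup>2)"
    by (rule Cauchy_Schwarz_ineq_sum)
  thus ?thesis unfolding n_dim_def grad_sq_def by simp
qed

lemma eta_y_hess_term_le: "- \<epsilon> * (kern x * eta_y_hess_grad x) \<le> 2 * n_dim * M2 * kern x * energy x"
proof -
  have "\<bar>eta_y_hess_grad x\<bar> \<le> (\<Sum>i\<in>UNIV. \<Sum>j\<in>UNIV. \<bar>eta_y_dxx j i x * grad i x * grad j x\<bar>)"
    unfolding eta_y_hess_grad_def by (rule order_trans[OF sum_abs sum_mono[OF sum_abs]])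
  also have "\<dots> \<le> (\<Sum>i\<in>UNIV. \<Sum>j\<in>UNIV. M2 * (\<bar>grad i x\<bar> * \<bar>grad j x\<bar>))"
  proof (intro sum_mono)
    fix i j
    have "\<bar>eta_y_dxx j i x\<bar> \<le> M2" unfolding eta_y_dxx_def using M2 by blast
    thus "\<bar>eta_y_dxx j i x * grad i x * grad j x\<bar> \<le> M2 * (\<bar>grad i x\<bar> * \<bar>grad j x\<bar>)"
      by (simp add: abs_mult mult.assoc mult_right_mono)
  qed
  also have "\<dots> = M2 * (\<Sum>i\<in>UNIV. \<Sum>j\<in>UNIV. \<bar>grad i x\<bar> * \<bar>grad j x\<bar>)"
    by (simp add: sum_distrib_left)
  also have "\<dots> = M2 * (\<Sum>i\<in>UNIV. \<bar>grad i x\<bar>)\<^sup>2"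
    using sum_product_square[of "\<lambda>i. \<bar>grad i x\<bar>"] by simp
  also have "\<dots> \<le> M2 * (n_dim * grad_sq x)" by (rule mult_left_mono[OF sum_abs_grad_sq_le M2_nonneg])
  finally have eta_y_hess_grad: "\<bar>eta_y_hess_grad x\<bar> \<le> M2 * (n_dim * grad_sq x)" .
  have "- \<epsilon> * (kern x * eta_y_hess_grad x) \<le> \<epsilon> * kern x * \<bar>eta_y_hess_grad x\<bar>"
  proof -
    have erx: "0 \<le> \<epsilon> * kern x" using eps kern_pos[of x] by simp
    have "- eta_y_hess_grad x \<le> \<bar>eta_y_hess_grad x\<bar>" by simp
    hence "\<epsilon> * kern x * (- eta_y_hess_grad x) \<le> \<epsilon> * kern x * \<bar>eta_y_hess_grad x\<bar>"
      by (rule mult_left_mono[OF _ erx])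
    thus ?thesis by simp
  qed
  also have "\<dots> \<le> \<epsilon> * kern x * (M2 * (n_dim * grad_sq x))" using eps kern_pos[of x] eta_y_hess_grad
    by (intro mult_left_mono) auto
  also have "\<dots> = n_dim * M2 * kern x * (\<epsilon> * grad_sq x)" by (simp add: algebra_simps)
  also have "\<dots> \<le> n_dim * M2 * kern x * (2 * energy x)"
    using eps_grad_sq_le n_dim_ge_1 M2_nonneg kern_pos[of x] by (intro mult_left_mono) auto
  finally show ?thesis by (simp add: algebra_simps)
qed

lemma cross_term_le: "norm (x - y) < 1/2 \<Longrightarrow> 2 * kern_eta_y_cross x * energy x
    \<le> n_dim * M1 * kern x / (2 * \<tau>0) * energy x"
proof -
  assume d: "norm (x - y) < 1/2"
  have "\<bar>kern_eta_y_cross x\<bar> \<le> (\<Sum>j\<in>UNIV. \<bar>rho_heat_dx y s t j x * eta_y_dx j x\<bar>)"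
    unfolding kern_eta_y_cross_def by (rule sum_abs)
  also have "\<dots> \<le> (\<Sum>j\<in>(UNIV::'n set). kern x / (4 * \<tau>0) * M1)"
  proof (rule sum_mono)
    fix j
    have "\<bar>(x - y) $ j\<bar> \<le> norm (x - y)" by (rule component_le_norm_cart)
    hence zj: "\<bar>(x - y) $ j\<bar> \<le> 1/2" using d by linarith
    have "\<bar>rho_heat_dx y s t j x\<bar> = kern x * \<bar>(x - y) $ j\<bar> / (2 * \<tau>0)"
      unfolding rho_heat_dx_eq using kern_pos[of x] tau0_pos by (simp add: abs_mult abs_divide)
    also have "\<dots> \<le> kern x * (1/2) / (2 * \<tau>0)"
      using zj kern_pos[of x] tau0_pos by (intro divide_right_mono mult_left_mono) auto
    finally have a: "\<bar>rho_heat_dx y s t j x\<bar> \<le> kern x / (4 * \<tau>0)" by simp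
    have b: "\<bar>eta_y_dx j x\<bar> \<le> M1" unfolding eta_y_dx_def using M1 by blast
    show "\<bar>rho_heat_dx y s t j x * eta_y_dx j x\<bar> \<le> kern x / (4 * \<tau>0) * M1"
      unfolding abs_mult by (rule mult_mono[OF a b]) (use kern_pos[of x] tau0_pos in auto)
  qed
  also have "\<dots> = n_dim * M1 * kern x / (4 * \<tau>0)" unfolding n_dim_def by simp
  finally have C: "\<bar>kern_eta_y_cross x\<bar> \<le> n_dim * M1 * kern x / (4 * \<tau>0)" .
  have "2 * kern_eta_y_cross x * energy x \<le> 2 * \<bar>kern_eta_y_cross x\<bar> * energy x"
    using energy_nonneg[of x] by (intro mult_right_mono) auto
  also have "\<dots> \<le> 2 * (n_dim * M1 * kern x / (4 * \<tau>0)) * energy x"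
  proof (rule mult_right_mono)
    show "2 * \<bar>kern_eta_y_cross x\<bar> \<le> 2 * (n_dim * M1 * kern x / (4 * \<tau>0))" using C by linarith
  qed (use energy_nonneg[of x] in simp)
  also have "\<dots> = n_dim * M1 * kern x / (2 * \<tau>0) * energy x" by simp
  finally show ?thesis .
qed

lemma eta_y_lap_term_le: "kern x * eta_y_lap x * energy x \<le> n_dim * M2 * kern x * energy x"
proof -
  have "\<bar>eta_y_lap x\<bar> \<le> (\<Sum>j\<in>UNIV. \<bar>eta_y_dxx j j x\<bar>)" unfolding eta_y_lap_def by (rule sum_abs)
  also have "\<dots> \<le> (\<Sum>j\<in>(UNIV::'n set). M2)" by (rule sum_mono) (use M2 in \<open>auto simp: eta_y_dxx_def\<close>)
  also have "\<dots> = n_dim * M2" unfolding n_dim_def by simp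
  finally have D: "eta_y_lap x \<le> n_dim * M2" by simp
  have "kern x * energy x * eta_y_lap x \<le> kern x * energy x * (n_dim * M2)"
    using D kern_pos[of x] energy_nonneg[of x] by (intro mult_left_mono) auto
  thus ?thesis by (simp add: algebra_simps)
qed

lemma kern_tail_bound: "norm (x - y) \<ge> 1/4 \<Longrightarrow> (1 + 1 / \<tau>0) * kern x
    \<le> kernel_const CARD('n) * exp (- 1 / (128 * \<tau>0))"
proof -
  assume d: "norm (x - y) \<ge> 1/4"
  define P where "P = (4 * pi * \<tau>0) powr (- (real CARD('n) - 1) / 2)"
  have kern: "kern x = P * exp (- (norm (x - y))\<^sup>2 / (4 * \<tau>0))"
    unfolding kern_def rho_heat_def P_def \<tau>0_def ..
  have "(1/4)\<^sup>2 \<le> (norm (x - y))\<^sup>2" using d by (intro power_mono) auto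
  hence "- (norm (x - y))\<^sup>2 / (4 * \<tau>0) \<le> - (1/16) / (4 * \<tau>0)" using tau0_pos
    by (intro divide_right_mono) (auto simp: power2_eq_square)
  hence "exp (- (norm (x - y))\<^sup>2 / (4 * \<tau>0)) \<le> exp (- 1 / (64 * \<tau>0))" by simp
  hence "kern x \<le> P * exp (- 1 / (64 * \<tau>0))" unfolding kern P_def by (intro mult_left_mono) auto
  hence "(1 + 1 / \<tau>0) * kern x \<le> (1 + 1 / \<tau>0) * (P * exp (- 1 / (64 * \<tau>0)))"
    using tau0_pos by (intro mult_left_mono) auto
  also have "\<dots> \<le> kernel_const CARD('n) * exp (- 1 / (128 * \<tau>0))"
    using heat_kernel_tail_bound[OF tau0_pos, of "CARD('n)"] unfolding P_def
    by (simp add: Suc_leI mult.assoc)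
  finally show ?thesis .
qed

lemma cutoff_terms_eq_0:
  assumes "norm (x - y) < 1/4 \<or> norm (x - y) \<ge> 1/2"
  shows "cutoff_flux_term x + cutoff_terms x = 0"
proof -
  have "eta_y_dx j x = 0" "eta_y_dxx i j x = 0" for i j
    unfolding eta_y_dx_def eta_y_dxx_def using eta_derivs_vanish[OF assms] by auto
  hence "eta_y_flux x = 0" "eta_y_hess_grad x = 0" "kern_eta_y_cross x = 0" "eta_y_lap x = 0"
    unfolding eta_y_flux_def eta_y_hess_grad_def kern_eta_y_cross_def eta_y_lap_def by auto
  thus ?thesis unfolding cutoff_flux_term_def cutoff_terms_def by simp
qed

lemma cutoff_terms_le_annulus:
  assumes "norm (x - y) < 1/2"
  shows "cutoff_flux_term x + cutoff_terms x \<le> error_const * energy x * ((1 + 1 / \<tau>0) * kern x)"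
proof -
  have "cutoff_flux_term x + cutoff_terms x
     \<le> 2 * glaeser_const * kern x * energy x + 2 * n_dim * M2 * kern x * energy x
         + n_dim * M1 * kern x / (2 * \<tau>0) * energy x + n_dim * M2 * kern x * energy x"
    using eta_y_flux_term_le[of x] eta_y_hess_term_le[of x] cross_term_le[OF assms]
        eta_y_lap_term_le[of x]
    unfolding cutoff_terms_def by (simp add: algebra_simps)
  also have "\<dots> = (kern x * energy x) * (2 * glaeser_const + 3 * n_dim * M2 + n_dim * M1 / (2 * \<tau>0))"
    by (simp add: algebra_simps)
  also have "\<dots> \<le> (kern x * energy x) * (error_const * (1 + 1 / \<tau>0))"
  proof (rule mult_left_mono)
    have "n_dim * M1 / (2 * \<tau>0) \<le> n_dim * M1 / \<tau>0" using tau0_pos n_dim_ge_1 M1_nonneg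
      by (intro divide_left_mono) auto
    moreover have "n_dim * M1 / \<tau>0 \<le> error_const / \<tau>0" unfolding error_const_def
      using tau0_pos glaeser_const_nonneg n_dim_ge_1 M2_nonneg by (intro divide_right_mono) auto
    moreover have "2 * glaeser_const + 3 * n_dim * M2 \<le> error_const" unfolding error_const_def
      using n_dim_ge_1 M1_nonneg by simp
    ultimately show "2 * glaeser_const + 3 * n_dim * M2 + n_dim * M1 / (2 * \<tau>0)
        \<le> error_const * (1 + 1 / \<tau>0)"
      by (simp add: algebra_simps)
    show "0 \<le> kern x * energy x" using kern_pos[of x] energy_nonneg[of x] by simp
  qed
  finally show ?thesis by (simp add: algebra_simps)
qed

lemma error_terms_le:
  "cutoff_flux_term x + cutoff_terms x
    \<le> mono_const * exp (- 1 / (128 * \<tau>0)) * (indicator (ball y (1/2)) x * energy x)"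
proof (cases "norm (x - y) < 1/4 \<or> norm (x - y) \<ge> 1/2")
  case True
  thus ?thesis using cutoff_terms_eq_0 mono_const_nonneg energy_nonneg[of x] by simp
next
  case False
  hence d: "norm (x - y) \<ge> 1/4" "norm (x - y) < 1/2" by auto
  have "cutoff_flux_term x + cutoff_terms x \<le> error_const * energy x * ((1 + 1 / \<tau>0) * kern x)"
    by (rule cutoff_terms_le_annulus[OF d(2)])
  also have "\<dots> \<le> error_const * energy x * (kernel_const CARD('n) * exp (- 1 / (128 * \<tau>0)))"
    using kern_tail_bound[OF d(1)] error_const_nonneg energy_nonneg[of x]
    by (intro mult_left_mono) auto
  also have "\<dots> = mono_const * exp (- 1 / (128 * \<tau>0)) * (indicator (ball y (1/2)) x * energy x)"
    using d(2) unfolding mono_const_eq by (simp add: dist_norm norm_minus_commute algebra_simps)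
  finally show ?thesis .
qed

lemma rho_tilde_eq: "rho_tilde \<eta> y s x t = kern x * eta_y x"
  unfolding rho_tilde_def kern_def eta_y_def ..

lemma continuous_norm_u_sq: "continuous_on UNIV (\<lambda>x. (norm (u x t))\<^sup>2)"
proof -
  have ci: "continuous_on UNIV (\<lambda>x. u x t $ i)" for i
  proof -
    have "continuous_on UNIV (\<lambda>x. (\<lambda>z::(real^'n) \<times> real. u (fst z) (snd z) $ i) (x, t))"
      by (rule continuous_on_compose2[OF u_cont[rule_format, of i]])
          (auto intro!: continuous_intros)
    thus ?thesis by simp
  qed
  have "continuous_on UNIV (\<lambda>x. \<Sum>i\<in>UNIV. (u x t $ i)\<^sup>2)"
    by (rule continuous_on_sum) (rule continuous_on_power[OF ci])
  thus ?thesis unfolding power2_norm_vec .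
qed

lemma continuous_xi: "continuous_on UNIV (\<lambda>x. xi_eps W \<epsilon> \<phi> x t)"
  unfolding xi_eps_def grad_def[symmetric]
  by (intro continuous_intros continuous_grad continuous_W_phi) (use eps in auto)

lemma dens_ibp_le_bound: "dens_ibp x \<le> (1/2) * (rho_tilde \<eta> y s x t * (norm (u x t))\<^sup>2
    * e_eps W \<epsilon> \<phi> x t)
    + 1 / (2 * (s - t)) * (xi_eps W \<epsilon> \<phi> x t * rho_tilde \<eta> y s x t)
    + mono_const * exp (- 1 / (128 * (s - t))) * (indicator (ball y (1/2)) x * e_eps W \<epsilon> \<phi> x t)"
proof -
  have "dens_ibp x \<le> kern x * eta_y x * (norm (u x t))\<^sup>2 * energy x / 2
      + xi_eps W \<epsilon> \<phi> x t * (kern x * eta_y x) / (2 * \<tau>0)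
     + mono_const * exp (- 1 / (128 * \<tau>0)) * (indicator (ball y (1/2)) x * energy x)"
    using dens_ibp_le[of x] error_terms_le[of x] by linarith
  thus ?thesis unfolding rho_tilde_eq energy_def[symmetric] \<tau>0_def[symmetric] by simp
qed

lemma rho_tilde_outside: "x \<notin> cball y (1/2) \<Longrightarrow> rho_tilde \<eta> y s x t = 0"
  unfolding rho_tilde_eq using eta_y_outside[OF norm_ge_if_notin_cball] by simp

lemma continuous_rho_tilde: "continuous_on UNIV (\<lambda>x. rho_tilde \<eta> y s x t)"
  unfolding rho_tilde_eq by (intro continuous_intros continuous_kern continuous_eta_y)

lemma continuous_e_eps: "continuous_on UNIV (\<lambda>x. e_eps W \<epsilon> \<phi> x t)"
  using continuous_energy unfolding energy_def[abs_def] .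

lemma integrable_bound_terms:
  "integrable lborel (\<lambda>x. rho_tilde \<eta> y s x t * (norm (u x t))\<^sup>2 * e_eps W \<epsilon> \<phi> x t)"
  "integrable lborel (\<lambda>x. xi_eps W \<epsilon> \<phi> x t * rho_tilde \<eta> y s x t)"
  "integrable lborel (\<lambda>x. indicator (ball y (1/2)) x * e_eps W \<epsilon> \<phi> x t)"
proof -
  show "integrable lborel (\<lambda>x. rho_tilde \<eta> y s x t * (norm (u x t))\<^sup>2 * e_eps W \<epsilon> \<phi> x t)"
    by (rule integrable_supported) (use rho_tilde_outside in
        \<open>auto intro!: continuous_intros continuous_rho_tilde continuous_norm_u_sq continuous_e_eps\<close>)
  show "integrable lborel (\<lambda>x. xi_eps W \<epsilon> \<phi> x t * rho_tilde \<eta> y s x t)"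
    by (rule integrable_supported) (use rho_tilde_outside in
        \<open>auto intro!: continuous_intros continuous_rho_tilde continuous_xi\<close>)
  have "set_integrable lborel (cball y (1/2)) (\<lambda>x. e_eps W \<epsilon> \<phi> x t)"
    unfolding set_integrable_def
    by (rule borel_integrable_compact) (auto intro: continuous_on_subset[OF continuous_e_eps])
  hence "set_integrable lborel (ball y (1/2)) (\<lambda>x. e_eps W \<epsilon> \<phi> x t)"
    by (rule set_integrable_subset) auto
  thus "integrable lborel (\<lambda>x. indicator (ball y (1/2)) x * e_eps W \<epsilon> \<phi> x t)"
    unfolding set_integrable_def by simp
qed

lemma integral_dens_t_le:
  "(\<integral>x. dens_t t x \<partial>lborel)
   \<le> (1/2) * (\<integral>x. rho_tilde \<eta> y s x t * (norm (u x t))\<^sup>2 * e_eps W \<epsilon> \<phi> x t \<partial>lborel)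
      + 1 / (2 * (s - t)) * (\<integral>x. xi_eps W \<epsilon> \<phi> x t * rho_tilde \<eta> y s x t \<partial>lborel)
      + mono_const * exp (- 1 / (128 * (s - t))) * (\<integral>x\<in>ball y (1/2). e_eps W \<epsilon> \<phi> x t \<partial>lborel)"
proof -
  note ints = integrable_bound_terms
  have "(\<integral>x. dens_t t x \<partial>lborel) = (\<integral>x. dens_ibp x \<partial>lborel)" by (rule dens_ibp_integral(2))
  also have "\<dots> \<le> (\<integral>x. (1/2) * (rho_tilde \<eta> y s x t * (norm (u x t))\<^sup>2 * e_eps W \<epsilon> \<phi> x t)
      + 1 / (2 * (s - t)) * (xi_eps W \<epsilon> \<phi> x t * rho_tilde \<eta> y s x t)
      + mono_const * exp (- 1 / (128 * (s - t))) * (indicator (ball y (1/2)) x * e_eps W \<epsilon> \<phi> x t)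
      \<partial>lborel)"
    by (rule integral_mono[OF dens_ibp_integral(1)]) (use ints dens_ibp_le_bound in auto)
  also have "\<dots> = (1/2) * (\<integral>x. rho_tilde \<eta> y s x t * (norm (u x t))\<^sup>2 * e_eps W \<epsilon> \<phi> x t \<partial>lborel)
      + 1 / (2 * (s - t)) * (\<integral>x. xi_eps W \<epsilon> \<phi> x t * rho_tilde \<eta> y s x t \<partial>lborel)
      + mono_const * exp (- 1 / (128 * (s - t)))
        * (\<integral>x. indicator (ball y (1/2)) x * e_eps W \<epsilon> \<phi> x t \<partial>lborel)"
    using ints by simp
  finally show ?thesis unfolding set_lebesgue_integral_def by simp
qed

lemma localized_energy_monotonicity:
  "\<exists>D. ((\<lambda>\<tau>. \<integral>x. rho_tilde \<eta> y s x \<tau> * e_eps W \<epsilon> \<phi> x \<tau> \<partial>lborel) has_real_derivative D) (at t)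
    \<and> D \<le> (1/2) * (\<integral>x. rho_tilde \<eta> y s x t * (norm (u x t))\<^sup>2 * e_eps W \<epsilon> \<phi> x t \<partial>lborel)
      + 1 / (2 * (s - t)) * (\<integral>x. xi_eps W \<epsilon> \<phi> x t * rho_tilde \<eta> y s x t \<partial>lborel)
      + mono_const * exp (- 1 / (128 * (s - t))) * (\<integral>x\<in>ball y (1/2). e_eps W \<epsilon> \<phi> x t \<partial>lborel)"
  using localized_energy_has_derivative integral_dens_t_le by blast

end

theorem proposition4p3:
  fixes \<eta> :: "real^'n::finite \<Rightarrow> real"
  assumes dim: "CARD('n) \<ge> 2"
    and eta_smooth: "smooth_fun \<eta>"
    and eta_supp: "\<exists>r<1/2. \<forall>x. r \<le> norm x \<longrightarrow> \<eta> x = 0"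
    and eta_bounds: "\<forall>x. 0 \<le> \<eta> x \<and> \<eta> x \<le> 1"
    and eta_one: "\<forall>x. norm x < 1/4 \<longrightarrow> \<eta> x = 1"
    and eta_radial: "\<forall>x z. norm x = norm z \<longrightarrow> \<eta> x = \<eta> z"
  shows "\<exists>c2::real. \<forall>(W::real \<Rightarrow> real) (\<epsilon>::real) (T::real)
            (u::real^'n \<Rightarrow> real \<Rightarrow> real^'n) (\<phi>::real^'n \<Rightarrow> real \<Rightarrow> real).
     ( (\<forall>x. 0 \<le> W x)
       \<and> (\<forall>k<3. \<forall>x. ((deriv ^^ k) W has_real_derivative (deriv ^^ Suc k) W x) (at x))
       \<and> continuous_on UNIV ((deriv ^^ 3) W)
       \<and> W 1 = 0 \<and> W (-1) = 0 \<and> deriv W 1 = 0 \<and> deriv W (-1) = 0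
       \<and> 0 < \<epsilon> \<and> \<epsilon> < 1 \<and> 0 < T
       \<and> (\<forall>i. smooth_fun (\<lambda>z::(real^'n) \<times> real. u (fst z) (snd z) $ i))
       \<and> phase_regular T \<phi>
       \<and> ( (zn_periodic \<phi> \<and> zn_periodic u)
           \<or> ((\<exists>R. \<forall>x. \<forall>t\<in>{0..T}. R < norm x \<longrightarrow> u x t = 0) \<and> decays_to_minus_one T \<phi>) )
       \<and> (\<forall>x. \<forall>t\<in>{0..T}.
            pdt T \<phi> x t + (\<Sum>i\<in>UNIV. u x t $ i * pdx i \<phi> x t)
              = (\<Sum>i\<in>UNIV. pdx i (pdx i \<phi>) x t) - deriv W (\<phi> x t) / \<epsilon>\<^sup>2) )
     \<longrightarrow> (\<forall>(y::real^'n) (s::real) (t::real). 0 < t \<and> t < s \<and> t < T \<longrightarrow>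
           (\<exists>D. ((\<lambda>\<tau>. \<integral>x. rho_tilde \<eta> y s x \<tau> * e_eps W \<epsilon> \<phi> x \<tau> \<partial>lborel)
                     has_real_derivative D) (at t)
              \<and> D \<le> (1/2) * (\<integral>x. rho_tilde \<eta> y s x t * (norm (u x t))\<^sup>2 * e_eps W \<epsilon> \<phi> x t \<partial>lborel)
                   + 1 / (2 * (s - t)) * (\<integral>x. xi_eps W \<epsilon> \<phi> x t * rho_tilde \<eta> y s x t \<partial>lborel)
                   + c2 * exp (- 1 / (128 * (s - t)))
                       * (\<integral>x\<in>ball y (1/2). e_eps W \<epsilon> \<phi> x t \<partial>lborel)))"
proof -
  interpret cutoff \<eta> using eta_smooth eta_supp eta_bounds eta_one by unfold_locales
  obtain M1 M2 where M1: "\<forall>i z. \<bar>eta_dx i z\<bar> \<le> M1" and M2: "\<forall>i j z. \<bar>eta_dxx i j z\<bar> \<le> M2"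
    using eta_dx_bounded eta_dxx_bounded by blast
  show ?thesis
  proof (rule exI[of _ "monotonicity_const CARD('n) M1 M2"], intro allI impI, elim conjE,
      goal_cases)
    case (1 W \<epsilon> T u \<phi> y s t)
    interpret localized_energy \<eta> M1 M2 W \<epsilon> T u \<phi> y s t
      using 1 M1 M2 iterated_deriv_imp_C1[of 3 W]
      by unfold_locales (auto simp: smooth_fun_continuous)
    show ?case using localized_energy_monotonicity unfolding mono_const_def .
  qed
qed

end
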